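(* (i) For every $\mathbf t\in\mathbb R^K$ and $L\ge0$, \[ \mathrm P_{\boldsymbol\Delta/\sigma_0=\mathbf t}\big(|\hat\tau_{\rm PT}-\tau|\le L(1+\|\boldsymbol\gamma\|_1)^{-1/2}\sigma_0\big)=\int_{\mathbb R^K}\Big[\Phi\Big(L-\frac{\langle\boldsymbol\gamma,\mathbf t-\mathbf u'\rangle}{\sqrt{1+\|\boldsymbol\gamma\|_1}}\Big)-\Phi\Big(-L-\frac{\langle\boldsymbol\gamma,\mathbf t-\mathbf u'\rangle}{\sqrt{1+\|\boldsymbol\gamma\|_1}}\Big)\Big]\phi_{\mathbf t,V}(\mathbf u)\,d\mathbf u, \] where for $\mathbf u\in\mathbb R^K$, $u_j'=u_j\,\mathbf 1\big(|u_j|>(1+\gamma_j^{-1})^{1/2}c_{\alpha/2}\big)$ for $j=1,\dots,K$. (ii) Let \[ \hat L_{\rm PT}=\inf\Big\{L\ge0:\inf_{\boldsymbol\Delta:|\Delta_j/\sigma_0|\le b_j\forall j}\mathrm P_{\boldsymbol\Delta}\big(|\hat\tau_{\rm PT}-\tau|\le L(1+\|\boldsymbol\gamma\|_1)^{-1/2}\sigma_0\big)\ge1-\zeta\Big\}. \] Then $\hat L_{\rm PT}$ is the solution in $L$ of \[ \inf_{\boldsymbol\Delta:|\Delta_j/\sigma_0|\le b_j\forall j}\mathrm P_{\boldsymbol\Delta}\big(|\hat\tau_{\rm PT}-\tau|\le L(1+\|\boldsymbol\gamma\|_1)^{-1/2}\sigma_0\big)=1-\zeta. \] The resulting interval $[\hat\tau_{\rm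 PT}\pm\hat L_{\rm PT}(1+\|\boldsymbol\gamma\|_1)^{-1/2}\sigma_0]$ is the shortest symmetric centered interval with data-independent half-length achieving uniform coverage $1-\zeta$.
   Context: Let $K\ge1$, $\tau\in\mathbb R$ unknown and $\boldsymbol\Delta=(\Delta_1,\dots,\Delta_K)\in\mathbb R^K$ unknown biases. We observe independent random variables $\hat\tau_0\sim N(\tau,\sigma_0^2)$ and $\hat\tau_j\sim N(\tau+\Delta_j,\sigma_j^2)$ for $j=1,\dots,K$, with $\sigma_0,\dots,\sigma_K>0$ known. Define $\gamma_j=\sigma_0^2/\sigma_j^2$, $\boldsymbol\gamma=(\gamma_1,\dots,\gamma_K)$ and $\|\boldsymbol\gamma\|_1=\sum_j\gamma_j$. $\langle\cdot,\cdot\rangle$ is the Euclidean inner product. Write $\Phi$ for the standard normal CDF, and $c_a=\Phi^{-1}(1-a)$ for $a\in(0,1)$. Fix $\alpha,\zeta\in(0,1)$ and $\mathbf b\in[0,\infty)^K$. Let $\mathcal A_j=\{|\hat\tau_j-\hat\tau_0|\le(1+\gamma_j^{-1})^{1/2}\sigma_0c_{\alpha/2}\}$. The pretest estimator is \[ \hat\tau_{\rm PT}=\hat\tau_0+\sum_{j=1}^K\frac{\gamma_j}{1+\|\boldsymbol\gamma\|_1}(\hat\tau_j-\hat\tau_0)\mathbf 1(\mathcal A_j). \] $V$ is the $K\times K$ matrix with $V_{ij}=1+\gamma_i^{-1}\mathbf 1(i=j)$, and $\phi_{\mathbf t,V}$ is the density of $N(\mathbf t,V)$. $\mathrm P_{\boldsymbol\Delta/\sigma_0=\mathbf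 t}$ means probability under $\boldsymbol\Delta=\sigma_0\mathbf t$. *)

theory Defs
  imports "HOL-Probability.Probability"
begin

definition Phi :: "real \<Rightarrow> real" where
  "Phi x = measure (density lborel std_normal_density) {..x}"

definition cq :: "real \<Rightarrow> real" where
  "cq a = (THE c. Phi c = 1 - a)"

(* gamma_j = sigma_0^2 / sigma_j^2, indices j range over the finite type 'k (|'k| = K) *)
definition gam :: "real \<Rightarrow> real^'k \<Rightarrow> real^'k" where
  "gam \<sigma>0 \<sigma> = (\<chi> j. \<sigma>0\<^sup>2 / (\<sigma>$j)\<^sup>2)"

definition norm1 :: "real^'k \<Rightarrow> real" where
  "norm1 g = (\<Sum>j\<in>UNIV. \<bar>g$j\<bar>)"

definition Vmat :: "real^'k \<Rightarrow> real^'k^'k" where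
  "Vmat g = (\<chi> i j. 1 + (if i = j then 1 / g$i else 0))"

definition mvn_density :: "real^'k \<Rightarrow> real^'k^'k \<Rightarrow> real^'k \<Rightarrow> real" where
  "mvn_density t V u =
     exp (- ((u - t) \<bullet> (matrix_inv V *v (u - t))) / 2) / sqrt ((2 * pi) ^ CARD('k) * det V)"

(* joint law of (tau0_hat, (tau_j_hat)_j): independent normals *)
definition data_meas :: "real \<Rightarrow> real^'k \<Rightarrow> real \<Rightarrow> real^'k \<Rightarrow> (real \<times> (real^'k)) measure" where
  "data_meas \<tau> \<Delta> \<sigma>0 \<sigma> = density lborel
     (\<lambda>(x0, x). normal_density \<tau> \<sigma>0 x0 * (\<Prod>j\<in>UNIV. normal_density (\<tau> + \<Delta>$j) (\<sigma>$j) (x$j)))"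

definition tau_PT :: "real \<Rightarrow> real \<Rightarrow> real^'k \<Rightarrow> real \<times> (real^'k) \<Rightarrow> real" where
  "tau_PT \<alpha> \<sigma>0 \<sigma> \<omega> = (let x0 = fst \<omega>; x = snd \<omega>; g = gam \<sigma>0 \<sigma> in
     x0 + (\<Sum>j\<in>UNIV. g$j / (1 + norm1 g) * (x$j - x0) *
        (if \<bar>x$j - x0\<bar> \<le> sqrt (1 + 1 / g$j) * \<sigma>0 * cq (\<alpha> / 2) then 1 else 0)))"

definition cover_prob :: "real \<Rightarrow> real \<Rightarrow> real^'k \<Rightarrow> real \<Rightarrow> real^'k \<Rightarrow> real \<Rightarrow> real" where
  "cover_prob \<alpha> \<sigma>0 \<sigma> \<tau> \<Delta> L = measure (data_meas \<tau> \<Delta> \<sigma>0 \<sigma>)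
     {\<omega> \<in> space (data_meas \<tau> \<Delta> \<sigma>0 \<sigma>).
        \<bar>tau_PT \<alpha> \<sigma>0 \<sigma> \<omega> - \<tau>\<bar> \<le> L / sqrt (1 + norm1 (gam \<sigma>0 \<sigma>)) * \<sigma>0}"

definition bias_set :: "real \<Rightarrow> real^'k \<Rightarrow> (real^'k) set" where
  "bias_set \<sigma>0 b = {\<Delta>. \<forall>j. \<bar>\<Delta>$j / \<sigma>0\<bar> \<le> b$j}"

definition unif_cov :: "real \<Rightarrow> real \<Rightarrow> real^'k \<Rightarrow> real^'k \<Rightarrow> real \<Rightarrow> real \<Rightarrow> real" where
  "unif_cov \<alpha> \<sigma>0 \<sigma> b \<tau> L = (INF \<Delta>\<in>bias_set \<sigma>0 b. cover_prob \<alpha> \<sigma>0 \<sigma> \<tau> \<Delta> L)"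

definition L_PT :: "real \<Rightarrow> real \<Rightarrow> real \<Rightarrow> real^'k \<Rightarrow> real^'k \<Rightarrow> real \<Rightarrow> real" where
  "L_PT \<alpha> \<zeta> \<sigma>0 \<sigma> b \<tau> = Inf {L. L \<ge> 0 \<and> unif_cov \<alpha> \<sigma>0 \<sigma> b \<tau> L \<ge> 1 - \<zeta>}"

definition trunc_vec :: "real \<Rightarrow> real^'k \<Rightarrow> real^'k \<Rightarrow> real^'k" where
  "trunc_vec \<alpha> g u = (\<chi> j. if \<bar>u$j\<bar> > sqrt (1 + 1 / g$j) * cq (\<alpha> / 2) then u$j else 0)"

end

(* In the standardised coordinates z = (tau0_hat - tau) / sigma0 and u = (tau_hat - tau0_hat) / sigma0,
   u is N(t, V) and, given u, z is normal with variance 1 / (1 + |gamma|_1); moreover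
   tau_PT - tau = sigma0 (z + s(u)) for a shift s(u) depending on u only.  Integrating out z given u
   yields formula (i).
   For (ii), every coverage probability is 2-Lipschitz in L, and on the unit box around t its
   integrand grows in L at a rate bounded below uniformly over the bias box.  Hence the uniform
   coverage U is continuous and strictly increasing on [0, oo), with U 0 = 0 and U L -> 1 since the
   pretest shift is bounded.  By the intermediate value theorem L_PT is the unique root of
   U L = 1 - zeta. *)

theory Submission
  imports Defs
begin

section \<open>The covariance matrix V\<close>

lemma matrix_inv_eqI:
  fixes A B :: "'a::comm_ring_1^'n^'n"
  assumes "A ** B = mat 1" "B ** A = mat 1"
  shows "matrix_inv A = B"
proof -
  have inv: "A ** matrix_inv A = mat 1 \<and> matrix_inv A ** A = mat 1"
    unfolding matrix_inv_def using assms by (rule someI[of _ B, OF conjI])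
  have "matrix_inv A = (B ** A) ** matrix_inv A"
    using assms by simp
  also have "\<dots> = B"
    using inv by (simp add: matrix_mul_assoc[symmetric])
  finally show ?thesis .
qed

lemma det_ones_row_diagonal:
  fixes d :: "'n::finite \<Rightarrow> 'a::comm_ring_1"
  shows "det (\<chi> i. if i = z then (\<chi> j. 1) else (\<chi> j. if i = j then d i else 0) :: 'a^'n^'n)
     = (\<Prod>j\<in>UNIV-{z}. d j)"
proof -
  let ?A = "(\<chi> i. if i = z then (\<chi> j. 1) else (\<chi> j. if i = j then d i else 0) :: 'a^'n^'n)"
  have off_identity: "(\<Prod>i\<in>UNIV. ?A$i$(p i)) = 0" if p: "p permutes UNIV" "p \<noteq> id" for p
  proof -
    obtain i where i: "p i \<noteq> i" using p(2) by (metis eq_id_iff)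
    have "\<exists>w. w \<noteq> z \<and> p w \<noteq> w"
    proof (cases "i = z")
      case True
      have "p (p z) \<noteq> p z"
        using permutes_inj[OF p(1)] i True by (metis injD)
      then show ?thesis using i True by metis
    qed (use i in blast)
    then obtain w where w: "w \<noteq> z" "p w \<noteq> w" by blast
    have "?A$w$(p w) = 0" using w by auto
    then show ?thesis by (intro prod_zero bexI[of _ w]) auto
  qed
  have "det ?A = of_int (sign (id::'n\<Rightarrow>'n)) * (\<Prod>i\<in>UNIV. ?A$i$(id i))"
    unfolding det_def
    by (subst sum.remove[where x=id]) (auto simp: permutes_id intro!: sum.neutral dest: off_identity)
  also have "\<dots> = (\<Prod>j\<in>UNIV-{z}. d j)"
    by (subst prod.remove[where x=z]) (simp_all add: sign_id)
  finally show ?thesis .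
qed

lemma det_ones_row_diagonal_plus_ones_rows:
  fixes d :: "'n::finite \<Rightarrow> 'a::comm_ring_1"
  assumes "finite T" "z \<notin> T"
  shows "det (\<chi> i. if i = z then (\<chi> j. 1)
                else (\<chi> j. (if i = j then d i else 0) + (if i \<in> T then 1 else 0)) :: 'a^'n^'n)
     = (\<Prod>j\<in>UNIV-{z}. d j)"
  using assms
proof (induction T rule: finite_induct)
  case empty
  have "(\<chi> i. if i = z then (\<chi> j. 1)
          else (\<chi> j. (if i = j then d i else 0) + (if i \<in> {} then 1 else 0)) :: 'a^'n^'n)
     = (\<chi> i. if i = z then (\<chi> j. 1) else (\<chi> j. if i = j then d i else 0))"
    by (simp add: vec_eq_iff)
  then show ?case using det_ones_row_diagonal[of z d] by simp
next
  case (insert y T)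
  let ?A = "(\<chi> i. if i = z then (\<chi> j. 1)
               else (\<chi> j. (if i = j then d i else 0) + (if i \<in> insert y T then 1 else 0)) :: 'a^'n^'n)"
  have yz: "y \<noteq> z" using insert by auto
  have "det ?A = det (\<chi> k. if k = y then row y ?A + (-1) *s row z ?A else row k ?A)"
    using det_row_operation[OF yz, of ?A "-1"] by simp
  also have "(\<chi> k. if k = y then row y ?A + (-1) *s row z ?A else row k ?A) =
     (\<chi> i. if i = z then (\<chi> j. 1) else (\<chi> j. (if i = j then d i else 0) + (if i \<in> T then 1 else 0)))"
    using yz insert by (auto simp: vec_eq_iff row_def)
  finally show ?case using insert by simp
qed

lemma det_diagonal_plus_ones_rows:
  fixes d :: "'n::finite \<Rightarrow> 'a::comm_ring_1"
  assumes "finite T"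
  shows "det (\<chi> i j. (if i = j then d i else 0) + (if i \<in> T then 1 else 0) :: 'a^'n^'n)
     = (\<Prod>j\<in>UNIV. d j) + (\<Sum>i\<in>T. \<Prod>j\<in>UNIV-{i}. d j)"
  using assms
proof (induction T rule: finite_induct)
  case empty
  then show ?case by (subst det_diagonal) auto
next
  case (insert z T)
  let ?a = "(\<chi> j. if z = j then d z else 0) :: 'a^'n"
  let ?c = "\<lambda>i. (\<chi> j. (if i = j then d i else 0) + (if i \<in> T then 1 else 0)) :: 'a^'n"
  have "(\<chi> i j. (if i = j then d i else 0) + (if i \<in> insert z T then 1 else 0) :: 'a^'n^'n)
     = (\<chi> i. if i = z then ?a + (\<chi> j. 1) else ?c i)"
    by (auto simp: vec_eq_iff)
  then have "det (\<chi> i j. (if i = j then d i else 0) + (if i \<in> insert z T then 1 else 0) :: 'a^'n^'n)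
     = det (\<chi> i. if i = z then ?a else ?c i) + det (\<chi> i. if i = z then (\<chi> j. 1) else ?c i)"
    by (simp add: det_row_add)
  also have "(\<chi> i. if i = z then ?a else ?c i) = (\<chi> i. ?c i)"
    using insert by (auto simp: vec_eq_iff)
  also have "det (\<chi> i. if i = z then (\<chi> j. 1) else ?c i) = (\<Prod>j\<in>UNIV-{z}. d j)"
    using det_ones_row_diagonal_plus_ones_rows[OF insert(1,2), of d] by simp
  finally show ?case using insert by simp
qed

lemma norm1_eq_sum: "(\<And>j. 0 \<le> g$j) \<Longrightarrow> norm1 g = (\<Sum>j\<in>UNIV. g$j)"
  unfolding norm1_def by simp

lemma gam_pos:
  assumes "0 < \<sigma>0" "\<And>j. 0 < \<sigma>$j"
  shows "0 < gam \<sigma>0 \<sigma> $ j"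
  using assms(1) assms(2)[of j] by (simp add: gam_def)

(* Sherman-Morrison inverse of V = diag (1 / g) + 1 1^T. *)
definition Vmat_inv :: "real^'k \<Rightarrow> real^'k^'k" where
  "Vmat_inv g = (\<chi> i j. (if i = j then g$i else 0) - g$i * g$j / (1 + norm1 g))"

lemma Vmat_mult_Vmat_inv:
  fixes g :: "real^'k"
  assumes g: "\<And>j. 0 < g$j"
  shows "Vmat g ** Vmat_inv g = mat 1"
proof -
  define G where "G = norm1 g"
  have G: "G = (\<Sum>j\<in>UNIV. g$j)" "0 \<le> G"
    unfolding G_def using g by (auto simp: norm1_eq_sum less_imp_le sum_nonneg)
  have entry: "(\<Sum>k\<in>UNIV. (1 + (if i = k then 1 / g$i else 0)) * X k) = sum X UNIV + X i / g$i"
    for i and X :: "'k \<Rightarrow> real"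
    by (simp add: distrib_right sum.distrib if_distrib[of "\<lambda>x. x * _"] cong: if_cong)
  have column_sum: "(\<Sum>k\<in>UNIV. (if k = j then g$k else 0) - g$k * g$j / (1 + G))
      = g$j - G * g$j / (1 + G)" for j
    by (simp add: sum_subtractf G(1) sum_divide_distrib[symmetric] sum_distrib_right[symmetric])
  have "(\<Sum>k\<in>UNIV. (1 + (if i = k then 1 / g$i else 0)) *
          ((if k = j then g$k else 0) - g$k * g$j / (1 + G))) = (if i = j then 1 else 0)" for i j
    unfolding entry column_sum
  proof -
    have "g$i \<noteq> 0" "1 + G \<noteq> 0" using g[of i] G(2) by auto
    then show "g$j - G * g$j / (1 + G) + ((if i = j then g$i else 0) - g$i * g$j / (1 + G)) / g$i
        = (if i = j then 1 else 0)"
      by (simp add: divide_simps) (simp add: algebra_simps)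
  qed
  then show ?thesis
    by (simp add: matrix_matrix_mult_def Vmat_def Vmat_inv_def mat_def vec_eq_iff G_def)
qed

lemma Vmat_inv_mult_Vmat:
  fixes g :: "real^'k"
  assumes "\<And>j. 0 < g$j"
  shows "Vmat_inv g ** Vmat g = mat 1"
proof -
  have "transpose (Vmat g) = Vmat g" "transpose (Vmat_inv g) = Vmat_inv g"
    by (auto simp: transpose_def Vmat_def Vmat_inv_def vec_eq_iff)
  then show ?thesis
    using arg_cong[OF Vmat_mult_Vmat_inv[OF assms], of transpose]
    by (simp add: matrix_transpose_mul transpose_mat)
qed

lemma matrix_inv_Vmat:
  fixes g :: "real^'k"
  assumes "\<And>j. 0 < g$j"
  shows "matrix_inv (Vmat g) = Vmat_inv g"
  using Vmat_mult_Vmat_inv[OF assms] Vmat_inv_mult_Vmat[OF assms] by (rule matrix_inv_eqI)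

lemma Vmat_inv_quadratic_form:
  fixes g w :: "real^'k"
  shows "w \<bullet> (Vmat_inv g *v w)
    = (\<Sum>j\<in>UNIV. g$j * (w$j)\<^sup>2) - (\<Sum>j\<in>UNIV. g$j * w$j)\<^sup>2 / (1 + norm1 g)"
proof -
  define S where "S = (\<Sum>j\<in>UNIV. g$j * w$j)"
  have entry: "(Vmat_inv g *v w)$i = g$i * w$i - g$i * S / (1 + norm1 g)" for i
  proof -
    have "(Vmat_inv g *v w)$i
        = (\<Sum>j\<in>UNIV. (if i = j then g$i * w$j else 0) - g$i / (1 + norm1 g) * (g$j * w$j))"
      unfolding Vmat_inv_def matrix_vector_mult_def by (auto intro!: sum.cong simp: algebra_simps)
    then show ?thesis
      by (simp add: sum_subtractf sum_distrib_left[symmetric] sum_divide_distrib[symmetric] S_def)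
  qed
  have "w \<bullet> (Vmat_inv g *v w) = (\<Sum>i\<in>UNIV. g$i * (w$i)\<^sup>2 - g$i * w$i * S / (1 + norm1 g))"
    unfolding inner_vec_def entry by (simp add: algebra_simps power2_eq_square)
  also have "\<dots> = (\<Sum>j\<in>UNIV. g$j * (w$j)\<^sup>2) - S * S / (1 + norm1 g)"
    by (simp add: sum_subtractf sum_divide_distrib[symmetric] sum_distrib_right[symmetric] S_def[symmetric])
  finally show ?thesis by (simp add: S_def power2_eq_square)
qed

lemma det_Vmat:
  fixes g :: "real^'k"
  assumes g: "\<And>j. 0 < g$j"
  shows "det (Vmat g) = (1 + norm1 g) / (\<Prod>j\<in>UNIV. g$j)"
proof -
  have "Vmat g = (\<chi> i j. (if i = j then 1 / g$i else 0) + (if i \<in> UNIV then 1 else 0))"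
    by (simp add: Vmat_def vec_eq_iff)
  then have "det (Vmat g) = (\<Prod>j\<in>UNIV. 1 / g$j) + (\<Sum>i\<in>UNIV. \<Prod>j\<in>UNIV-{i}. 1 / g$j)"
    using det_diagonal_plus_ones_rows[of UNIV "\<lambda>i. 1 / g$i"] by simp
  also have "(\<Sum>i\<in>UNIV. \<Prod>j\<in>UNIV-{i}. 1 / g$j) = (\<Sum>i\<in>UNIV. g$i / (\<Prod>j\<in>UNIV. g$j))"
  proof (rule sum.cong[OF refl])
    fix i
    have "(\<Prod>j\<in>UNIV. 1 / g$j) = 1 / g$i * (\<Prod>j\<in>UNIV-{i}. 1 / g$j)"
      by (subst prod.remove[where x=i]) auto
    then show "(\<Prod>j\<in>UNIV-{i}. 1 / g$j) = g$i / (\<Prod>j\<in>UNIV. g$j)"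
      using g[of i] by (simp add: prod_dividef field_simps)
  qed
  finally show ?thesis
    using g by (simp add: norm1_eq_sum less_imp_le prod_dividef add_divide_distrib sum_divide_distrib[symmetric])
qed

lemma det_Vmat_pos:
  fixes g :: "real^'k"
  assumes "\<And>j. 0 < g$j"
  shows "0 < det (Vmat g)"
  using assms by (simp add: det_Vmat norm1_def add_pos_nonneg sum_nonneg prod_pos)

section \<open>Gaussian densities and the normal CDF\<close>

lemma real_sqrt_prod: "sqrt (\<Prod>x\<in>A. f x) = (\<Prod>x\<in>A. sqrt (f x))"
  by (induction A rule: infinite_finite_induct) (auto simp: real_sqrt_mult)

lemma normal_density_rescale:
  assumes c: "0 < c"
  shows "c * normal_density (a + c * m) s (a + c * x) = normal_density m (s / c) x"
proof -
  have "sqrt (2 * pi * (s / c)\<^sup>2) = sqrt (2 * pi * s\<^sup>2) / c"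
    using c by (simp add: power_divide real_sqrt_divide)
  moreover have "(a + c * x - (a + c * m))\<^sup>2 / (2 * s\<^sup>2) = (x - m)\<^sup>2 / (2 * (s / c)\<^sup>2)"
    using c by (simp add: power_divide power_mult_distrib right_diff_distrib[symmetric])
  ultimately show ?thesis
    using c unfolding normal_density_def by simp
qed

lemma normal_density_inverse_sqrt:
  assumes "0 < g"
  shows "normal_density m (1 / sqrt g) x = sqrt g / sqrt (2 * pi) * exp (- (g * (x - m)\<^sup>2) / 2)"
  using assms by (simp add: normal_density_def power_divide real_sqrt_divide real_sqrt_mult)

lemma sum_squares_complete_square:
  fixes g w :: "'k::finite \<Rightarrow> real"
  defines "G \<equiv> 1 + (\<Sum>j\<in>UNIV. g j)" and "S \<equiv> (\<Sum>j\<in>UNIV. g j * w j)"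
  assumes "G \<noteq> 0"
  shows "z\<^sup>2 + (\<Sum>j\<in>UNIV. g j * (z + w j)\<^sup>2)
    = ((\<Sum>j\<in>UNIV. g j * (w j)\<^sup>2) - S\<^sup>2 / G) + G * (z + S / G)\<^sup>2"
proof -
  have "(\<Sum>j\<in>UNIV. g j * (z + w j)\<^sup>2) = (G - 1) * z\<^sup>2 + 2 * z * S + (\<Sum>j\<in>UNIV. g j * (w j)\<^sup>2)"
    by (simp add: G_def S_def power2_eq_square algebra_simps sum.distrib sum_distrib_left sum_distrib_right)
  then show ?thesis
    using assms(3) by (simp add: power2_eq_square field_simps)
qed

lemma real_distribution_std_normal: "real_distribution (density lborel std_normal_density)"
  using prob_space_normal_density[of 1 0] by (simp add: real_distribution_def real_distribution_axioms_def)

interpretation std_normal: real_distribution "density lborel std_normal_density"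
  by (rule real_distribution_std_normal)

lemma Phi_eq_cdf: "Phi = cdf (density lborel std_normal_density)"
  by (simp add: fun_eq_iff Phi_def cdf_def)

lemma Phi_mono: "x \<le> y \<Longrightarrow> Phi x \<le> Phi y"
  unfolding Phi_eq_cdf by (rule std_normal.cdf_nondecreasing)

lemma Phi_nonneg: "0 \<le> Phi x" and Phi_le_1: "Phi x \<le> 1"
  unfolding Phi_eq_cdf by (rule std_normal.cdf_nonneg, rule std_normal.cdf_bounded_prob)

lemma borel_measurable_Phi[measurable]: "Phi \<in> borel_measurable borel"
  by (rule borel_measurable_mono) (auto simp: mono_def Phi_mono)

lemma Phi_at_top: "(Phi \<longlongrightarrow> 1) at_top" and Phi_at_bot: "(Phi \<longlongrightarrow> 0) at_bot"
  unfolding Phi_eq_cdf by (rule std_normal.cdf_lim_at_top_prob, rule std_normal.cdf_lim_at_bot)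

lemma exists_Phi_symmetric_ge:
  assumes "c < 1"
  shows "\<exists>r\<ge>0. c \<le> Phi r - Phi (- r)"
proof -
  have "((\<lambda>r. Phi r - Phi (- r)) \<longlongrightarrow> 1 - 0) at_top"
    by (intro tendsto_diff Phi_at_top filterlim_compose[OF Phi_at_bot filterlim_uminus_at_bot_at_top])
  then have "eventually (\<lambda>r. c < Phi r - Phi (- r)) at_top"
    using \<open>c < 1\<close> by (simp add: order_tendsto_iff)
  then have "eventually (\<lambda>r. 0 \<le> r \<and> c < Phi r - Phi (- r)) at_top"
    using eventually_ge_at_top[of 0] by (rule eventually_conj[rotated])
  then show ?thesis
    unfolding eventually_at_top_linorder by (meson less_imp_le order_refl)
qed

lemma Phi_diff_eq_nn_integral:
  assumes "x \<le> y"
  shows "ennreal (Phi y - Phi x) = (\<integral>\<^sup>+z. ennreal (std_normal_density z) * indicator {x<..y} z \<partial>lborel)"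
  using std_normal.emeasure_Ioc[OF assms] by (simp add: Phi_eq_cdf emeasure_density)

lemma Phi_diff_le:
  assumes "x \<le> y"
  shows "Phi y - Phi x \<le> y - x"
proof -
  have "std_normal_density z \<le> 1" for z
  proof -
    have "exp (- (z\<^sup>2 / 2)) \<le> 1" by simp
    also have "1 \<le> sqrt (2 * pi)" using pi_gt3 by (intro real_le_rsqrt) simp
    finally show ?thesis by (simp add: std_normal_density_def divide_le_eq)
  qed
  then have "ennreal (Phi y - Phi x) \<le> (\<integral>\<^sup>+z. indicator {x<..y} z \<partial>lborel)"
    unfolding Phi_diff_eq_nn_integral[OF assms]
    by (intro nn_integral_mono) (auto simp: indicator_def)
  then show ?thesis using assms by (simp add: ennreal_le_iff)
qed

lemma Phi_diff_ge:
  assumes "x \<le> y" "\<bar>x\<bar> \<le> R" "\<bar>y\<bar> \<le> R"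
  shows "(y - x) * std_normal_density R \<le> Phi y - Phi x"
proof -
  have "std_normal_density R \<le> std_normal_density z" if "\<bar>z\<bar> \<le> R" for z
  proof -
    have "z\<^sup>2 \<le> R\<^sup>2" using that by (metis abs_le_square_iff abs_of_nonneg abs_ge_zero order_trans)
    then show ?thesis by (simp add: std_normal_density_def divide_right_mono)
  qed
  then have "(\<integral>\<^sup>+z. ennreal (std_normal_density R) * indicator {x<..y} z \<partial>lborel)
      \<le> (\<integral>\<^sup>+z. ennreal (std_normal_density z) * indicator {x<..y} z \<partial>lborel)"
    using assms by (intro nn_integral_mono) (auto simp: indicator_def intro: ennreal_leI)
  moreover have "(\<integral>\<^sup>+z. ennreal (std_normal_density R) * indicator {x<..y} z \<partial>lborel)
      = ennreal ((y - x) * std_normal_density R)"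
    using assms(1) by (simp add: nn_integral_cmult ennreal_mult mult.commute)
  ultimately show ?thesis
    unfolding Phi_diff_eq_nn_integral[OF assms(1), symmetric]
    using Phi_mono[OF assms(1)] by (simp add: ennreal_le_iff)
qed

lemma nn_integral_normal_density_Icc:
  assumes s: "0 < s" and "lo \<le> hi"
  shows "(\<integral>\<^sup>+z. ennreal (normal_density m s z) * indicator {lo..hi} z \<partial>lborel)
     = ennreal (Phi ((hi - m) / s) - Phi ((lo - m) / s))"
proof -
  define a b where "a = (lo - m) / s" and "b = (hi - m) / s"
  have "a \<le> b" using assms by (simp add: a_def b_def divide_right_mono)
  have "(\<integral>\<^sup>+z. ennreal (normal_density m s z) * indicator {lo..hi} z \<partial>lborel)
     = (\<integral>\<^sup>+y. ennreal s * (ennreal (normal_density m s (m + s * y)) * indicator {lo..hi} (m + s * y)) \<partial>lborel)"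
    using s by (subst nn_integral_real_affine[where c=s and t=m]) (auto simp: nn_integral_cmult)
  also have "\<dots> = (\<integral>\<^sup>+y. ennreal (std_normal_density y) * indicator {a<..b} y \<partial>lborel)"
  proof (rule nn_integral_cong_AE)
    show "AE y in lborel. ennreal s * (ennreal (normal_density m s (m + s * y)) * indicator {lo..hi} (m + s * y))
        = ennreal (std_normal_density y) * indicator {a<..b} y"
      using AE_lborel_singleton[of a]
    proof eventually_elim
      case (elim y)
      have "(m + s * y \<in> {lo..hi}) = (y \<in> {a..b})"
        using s by (auto simp: a_def b_def field_simps)
      moreover have "s * normal_density m s (m + s * y) = std_normal_density y"
        using normal_density_rescale[OF s, of m 0 s y] s by simp
      ultimately show ?case
        using elim s by (auto simp: indicator_def ennreal_mult[symmetric])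
    qed
  qed
  also have "\<dots> = ennreal (Phi b - Phi a)"
    by (rule Phi_diff_eq_nn_integral[OF \<open>a \<le> b\<close>, symmetric])
  finally show ?thesis by (simp add: a_def b_def)
qed

lemma mvn_density_Vmat:
  fixes g t u :: "real^'k"
  assumes g: "\<And>j. 0 < g$j"
  shows "mvn_density t (Vmat g) u
    = sqrt (\<Prod>j\<in>UNIV. g$j) / (sqrt (2 * pi) ^ CARD('k) * sqrt (1 + norm1 g))
      * exp (- ((\<Sum>j\<in>UNIV. g$j * (u$j - t$j)\<^sup>2) - (\<Sum>j\<in>UNIV. g$j * (u$j - t$j))\<^sup>2 / (1 + norm1 g)) / 2)"
proof -
  have "0 < (\<Prod>j\<in>UNIV. g$j)" "0 \<le> norm1 g"
    using g by (auto simp: prod_pos norm1_def sum_nonneg)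
  then have "sqrt ((2 * pi) ^ CARD('k) * det (Vmat g))
      = sqrt (2 * pi) ^ CARD('k) * sqrt (1 + norm1 g) / sqrt (\<Prod>j\<in>UNIV. g$j)"
    by (simp add: det_Vmat[OF g] real_sqrt_mult real_sqrt_divide real_sqrt_power power_mult_distrib)
  then show ?thesis
    unfolding mvn_density_def matrix_inv_Vmat[OF g] Vmat_inv_quadratic_form by simp
qed

lemma mvn_density_Vmat_pos:
  fixes g :: "real^'k"
  assumes "\<And>j. 0 < g$j"
  shows "0 < mvn_density t (Vmat g) u"
  using det_Vmat_pos[OF assms] by (simp add: mvn_density_def)

lemma borel_measurable_mvn_density[measurable]: "mvn_density t V \<in> borel_measurable borel"
proof -
  have "continuous_on UNIV (\<lambda>u. (u - t) \<bullet> (matrix_inv V *v (u - t)))"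
    unfolding matrix_vector_mult_diff_distrib
    by (intro continuous_intros linear_continuous_on[OF matrix_vector_mul_bounded_linear])
  note [measurable] = borel_measurable_continuous_onI[OF this]
  show ?thesis unfolding mvn_density_def[abs_def] by measurable
qed

lemma mvn_density_Vmat_ge:
  fixes g t u :: "real^'k"
  assumes g: "\<And>j. 0 < g$j" and u: "\<And>j. \<bar>u$j - t$j\<bar> \<le> 1"
  shows "exp (- norm1 g / 2) / sqrt ((2 * pi) ^ CARD('k) * det (Vmat g)) \<le> mvn_density t (Vmat g) u"
proof -
  have "(u - t) \<bullet> (matrix_inv (Vmat g) *v (u - t)) \<le> (\<Sum>j\<in>UNIV. g$j * ((u - t)$j)\<^sup>2)"
    unfolding matrix_inv_Vmat[OF g] Vmat_inv_quadratic_form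
    using g by (simp add: norm1_def add_pos_nonneg sum_nonneg less_imp_le)
  also have "\<dots> \<le> (\<Sum>j\<in>UNIV. g$j)"
  proof (rule sum_mono)
    fix j
    have "((u - t)$j)\<^sup>2 \<le> 1"
      using u[of j] by (simp add: abs_square_le_1)
    then show "g$j * ((u - t)$j)\<^sup>2 \<le> g$j"
      using g[of j] by (simp add: mult_left_le)
  qed
  also have "\<dots> = norm1 g"
    using g by (simp add: norm1_eq_sum less_imp_le)
  finally show ?thesis
    unfolding mvn_density_def using det_Vmat_pos[OF g] by (intro divide_right_mono) auto
qed

section \<open>Standardising the data\<close>

lemma measure_lborel_cbox_cube:
  fixes t :: "real^'k"
  assumes "0 \<le> r"
  shows "measure lborel (cbox (t - (\<chi> j. r)) (t + (\<chi> j. r))) = (2 * r) ^ CARD('k)"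
proof -
  have Basis: "(Basis :: (real^'k) set) = range (\<lambda>j. axis j 1)"
    by (auto simp: Basis_vec_def Basis_real_def)
  have "(\<Prod>b\<in>(Basis :: (real^'k) set). ((t + (\<chi> j. r)) - (t - (\<chi> j. r))) \<bullet> b) = (\<Prod>b\<in>(Basis :: (real^'k) set). 2 * r)"
    unfolding Basis by (intro prod.cong) (auto simp: inner_axis)
  moreover have "\<forall>b\<in>(Basis :: (real^'k) set). (t - (\<chi> j. r)) \<bullet> b \<le> (t + (\<chi> j. r)) \<bullet> b"
    unfolding Basis using assms by (auto simp: inner_axis)
  ultimately show ?thesis
    by (simp add: measure_lborel_cbox_eq)
qed

lemma nn_integral_lborel_affine:
  fixes f :: "'a::euclidean_space \<Rightarrow> ennreal"
  assumes [measurable]: "f \<in> borel_measurable borel" and "c \<noteq> 0"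
  shows "(\<integral>\<^sup>+x. f x \<partial>lborel) = ennreal (\<bar>c\<bar> ^ DIM('a)) * (\<integral>\<^sup>+u. f (t + c *\<^sub>R u) \<partial>lborel)"
  by (subst lborel_affine[OF \<open>c \<noteq> 0\<close>, of t])
     (simp add: nn_integral_density nn_integral_distr nn_integral_cmult)

lemma nn_integral_lborel_vec_prod:
  fixes h :: "'k::finite \<Rightarrow> real \<Rightarrow> ennreal"
  assumes [measurable]: "\<And>j. h j \<in> borel_measurable borel"
  shows "(\<integral>\<^sup>+x. (\<Prod>j\<in>UNIV. h j (x$j)) \<partial>(lborel :: (real^'k) measure)) = (\<Prod>j\<in>UNIV. \<integral>\<^sup>+y. h j y \<partial>lborel)"
proof -
  have Basis: "(Basis :: (real^'k) set) = range (\<lambda>j. axis j 1)"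
    by (auto simp: Basis_vec_def Basis_real_def)
  have inj: "inj (\<lambda>j::'k. axis j (1::real))"
    by (auto simp: inj_on_def axis_eq_axis)
  have "(\<integral>\<^sup>+x. (\<Prod>b\<in>(Basis :: (real^'k) set). h (axis_index b) (x \<bullet> b)) \<partial>lborel)
      = (\<Prod>b\<in>(Basis :: (real^'k) set). \<integral>\<^sup>+y. h (axis_index b) y \<partial>lborel)"
    by (rule nn_integral_lborel_prod) auto
  then show ?thesis
    unfolding Basis by (simp add: prod.reindex[OF inj] inner_axis)
qed

lemma borel_measurable_vec_nth[measurable]: "(\<lambda>x::real^'k. x$j) \<in> borel_measurable borel"
  by (intro borel_measurable_continuous_onI continuous_intros)

lemma borel_measurable_fst_vec[measurable]: "fst \<in> borel_measurable (borel :: (real \<times> (real^'k)) measure)"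
  by (intro borel_measurable_continuous_onI continuous_intros)

lemma borel_measurable_snd_vec[measurable]: "snd \<in> borel_measurable (borel :: (real \<times> (real^'k)) measure)"
  by (intro borel_measurable_continuous_onI continuous_intros)

lemma borel_measurable_standardize:
  fixes f :: "real \<times> (real^'k) \<Rightarrow> ennreal"
  assumes f[measurable]: "f \<in> borel_measurable borel"
  shows "(\<lambda>(u, z). f (a + c * z, (\<chi> j. a + c * z) + c *\<^sub>R u)) \<in> borel_measurable (lborel \<Otimes>\<^sub>M lborel)"
proof -
  have "continuous_on UNIV (\<lambda>p::(real^'k) \<times> real. (a + c * snd p, (\<chi> j. a + c * snd p) + c *\<^sub>R fst p))"
    by (intro continuous_intros)
  note [measurable] = borel_measurable_continuous_onI[OF this]
  show ?thesis
    unfolding lborel_prod case_prod_beta by measurable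
qed

lemma nn_integral_lborel_standardize:
  fixes f :: "real \<times> (real^'k) \<Rightarrow> ennreal"
  assumes c: "0 < c" and f[measurable]: "f \<in> borel_measurable borel"
  shows "(\<integral>\<^sup>+\<omega>. f \<omega> \<partial>lborel)
    = ennreal (c ^ Suc CARD('k)) * (\<integral>\<^sup>+u. \<integral>\<^sup>+z. f (a + c * z, (\<chi> j. a + c * z) + c *\<^sub>R u) \<partial>lborel \<partial>lborel)"
proof -
  have shear[measurable]: "(\<lambda>(x0, u). f (x0, (\<chi> j. x0) + c *\<^sub>R u)) \<in> borel_measurable (lborel \<Otimes>\<^sub>M lborel)"
  proof -
    have "continuous_on UNIV (\<lambda>p::real \<times> (real^'k). (fst p, (\<chi> j. fst p) + c *\<^sub>R snd p))"
      by (intro continuous_intros)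
    note [measurable] = borel_measurable_continuous_onI[OF this]
    show ?thesis
      unfolding lborel_prod case_prod_beta by measurable
  qed
  note [measurable] = borel_measurable_standardize[OF f, of a c]
  have "(\<integral>\<^sup>+\<omega>. f \<omega> \<partial>lborel) = (\<integral>\<^sup>+x0. \<integral>\<^sup>+x. f (x0, x) \<partial>lborel \<partial>lborel)"
    using lborel.nn_integral_fst[of f] by (simp add: lborel_prod)
  also have "\<dots> = (\<integral>\<^sup>+x0. ennreal (c ^ CARD('k)) * (\<integral>\<^sup>+u. f (x0, (\<chi> j. x0) + c *\<^sub>R u) \<partial>lborel) \<partial>lborel)"
  proof (rule nn_integral_cong)
    fix x0 :: real
    show "(\<integral>\<^sup>+x. f (x0, x) \<partial>lborel) = ennreal (c ^ CARD('k)) * (\<integral>\<^sup>+u. f (x0, (\<chi> j. x0) + c *\<^sub>R u) \<partial>lborel)"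
      using nn_integral_lborel_affine[of "\<lambda>x. f (x0, x)" c "\<chi> j. x0"] c by simp
  qed
  also have "\<dots> = ennreal c * (\<integral>\<^sup>+z. ennreal (c ^ CARD('k))
      * (\<integral>\<^sup>+u. f (a + c * z, (\<chi> j. a + c * z) + c *\<^sub>R u) \<partial>lborel) \<partial>lborel)"
    using c by (subst nn_integral_real_affine[where c=c and t=a]) simp_all
  also have "\<dots> = ennreal (c ^ Suc CARD('k))
      * (\<integral>\<^sup>+z. \<integral>\<^sup>+u. f (a + c * z, (\<chi> j. a + c * z) + c *\<^sub>R u) \<partial>lborel \<partial>lborel)"
    using c by (simp add: nn_integral_cmult ennreal_mult mult.assoc)
  also have "(\<integral>\<^sup>+z. \<integral>\<^sup>+u. f (a + c * z, (\<chi> j. a + c * z) + c *\<^sub>R u) \<partial>lborel \<partial>lborel)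
      = (\<integral>\<^sup>+u. \<integral>\<^sup>+z. f (a + c * z, (\<chi> j. a + c * z) + c *\<^sub>R u) \<partial>lborel \<partial>lborel)"
    by (rule lborel_pair.Fubini'[symmetric]) measurable
  finally show ?thesis .
qed

definition data_density :: "real \<Rightarrow> real^'k \<Rightarrow> real \<Rightarrow> real^'k \<Rightarrow> real \<times> (real^'k) \<Rightarrow> real" where
  "data_density \<tau> \<Delta> \<sigma>0 \<sigma> \<omega> =
     normal_density \<tau> \<sigma>0 (fst \<omega>) * (\<Prod>j\<in>UNIV. normal_density (\<tau> + \<Delta>$j) (\<sigma>$j) (snd \<omega> $ j))"

lemma data_meas_eq_density: "data_meas \<tau> \<Delta> \<sigma>0 \<sigma> = density lborel (data_density \<tau> \<Delta> \<sigma>0 \<sigma>)"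
  by (simp add: data_meas_def data_density_def case_prod_beta')

lemma borel_measurable_data_density[measurable]: "data_density \<tau> \<Delta> \<sigma>0 \<sigma> \<in> borel_measurable borel"
  unfolding data_density_def[abs_def] by measurable

lemma data_density_nonneg: "0 \<le> data_density \<tau> \<Delta> \<sigma>0 \<sigma> \<omega>"
  by (simp add: data_density_def prod_nonneg)

lemma sets_data_meas[simp]: "sets (data_meas \<tau> \<Delta> \<sigma>0 \<sigma>) = sets borel"
  by (simp add: data_meas_def)

lemma space_data_meas[simp]: "space (data_meas \<tau> \<Delta> \<sigma>0 \<sigma>) = UNIV"
  by (simp add: data_meas_def)

lemma nn_integral_data_meas_fst:
  fixes \<sigma> \<Delta> :: "real^'k"
  assumes \<sigma>: "\<And>j. 0 < \<sigma>$j" and [measurable]: "h \<in> borel_measurable borel"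
  shows "(\<integral>\<^sup>+\<omega>. h (fst \<omega>) \<partial>data_meas \<tau> \<Delta> \<sigma>0 \<sigma>) = (\<integral>\<^sup>+x0. ennreal (normal_density \<tau> \<sigma>0 x0) * h x0 \<partial>lborel)"
proof -
  have "(\<integral>\<^sup>+\<omega>. h (fst \<omega>) \<partial>data_meas \<tau> \<Delta> \<sigma>0 \<sigma>)
      = (\<integral>\<^sup>+\<omega>. ennreal (data_density \<tau> \<Delta> \<sigma>0 \<sigma> \<omega>) * h (fst \<omega>) \<partial>lborel)"
    unfolding data_meas_eq_density by (rule nn_integral_density) measurable
  also have "\<dots> = (\<integral>\<^sup>+x0. \<integral>\<^sup>+x. ennreal (data_density \<tau> \<Delta> \<sigma>0 \<sigma> (x0, x)) * h x0 \<partial>lborel \<partial>lborel)"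
    using lborel.nn_integral_fst[of "\<lambda>\<omega>. ennreal (data_density \<tau> \<Delta> \<sigma>0 \<sigma> \<omega>) * h (fst \<omega>)"]
    by (simp add: lborel_prod)
  also have "\<dots> = (\<integral>\<^sup>+x0. \<integral>\<^sup>+x. ennreal (normal_density \<tau> \<sigma>0 x0) * h x0
      * (\<Prod>j\<in>UNIV. ennreal (normal_density (\<tau> + \<Delta>$j) (\<sigma>$j) (x$j))) \<partial>lborel \<partial>lborel)"
    by (simp add: data_density_def ennreal_mult prod_ennreal prod_nonneg mult_ac)
  also have "\<dots> = (\<integral>\<^sup>+x0. ennreal (normal_density \<tau> \<sigma>0 x0) * h x0
      * (\<Prod>j\<in>UNIV. \<integral>\<^sup>+y. ennreal (normal_density (\<tau> + \<Delta>$j) (\<sigma>$j) y) \<partial>lborel) \<partial>lborel)"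
    using nn_integral_lborel_vec_prod[of "\<lambda>j y. ennreal (normal_density (\<tau> + \<Delta>$j) (\<sigma>$j) y)"]
    by (simp add: nn_integral_cmult)
  also have "\<dots> = (\<integral>\<^sup>+x0. ennreal (normal_density \<tau> \<sigma>0 x0) * h x0 \<partial>lborel)"
    using prob_space.emeasure_space_1[OF prob_space_normal_density[OF \<sigma>]]
    by (simp add: emeasure_density)
  finally show ?thesis .
qed

lemma prob_space_data_meas:
  fixes \<sigma> \<Delta> :: "real^'k"
  assumes "0 < \<sigma>0" "\<And>j. 0 < \<sigma>$j"
  shows "prob_space (data_meas \<tau> \<Delta> \<sigma>0 \<sigma>)"
proof
  show "emeasure (data_meas \<tau> \<Delta> \<sigma>0 \<sigma>) (space (data_meas \<tau> \<Delta> \<sigma>0 \<sigma>)) = 1"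
    using nn_integral_data_meas_fst[OF assms(2), of "\<lambda>_. 1" \<tau> \<Delta> \<sigma>0]
      prob_space.emeasure_space_1[OF prob_space_normal_density[OF assms(1)]]
    by (simp add: emeasure_density)
qed

lemma measure_data_meas_fst_deviation:
  fixes \<sigma> \<Delta> :: "real^'k"
  assumes \<sigma>0: "0 < \<sigma>0" and \<sigma>: "\<And>j. 0 < \<sigma>$j" and r: "0 \<le> r"
  shows "measure (data_meas \<tau> \<Delta> \<sigma>0 \<sigma>) {\<omega> \<in> space (data_meas \<tau> \<Delta> \<sigma>0 \<sigma>). \<bar>fst \<omega> - \<tau>\<bar> \<le> r * \<sigma>0}
    = Phi r - Phi (- r)"
proof -
  define I where "I = {\<tau> - r * \<sigma>0 .. \<tau> + r * \<sigma>0}"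
  have event: "{\<omega> \<in> space (data_meas \<tau> \<Delta> \<sigma>0 \<sigma>). \<bar>fst \<omega> - \<tau>\<bar> \<le> r * \<sigma>0} = fst -` I"
    by (auto simp: I_def abs_le_iff)
  have "emeasure (data_meas \<tau> \<Delta> \<sigma>0 \<sigma>) (fst -` I) = (\<integral>\<^sup>+\<omega>. indicator I (fst \<omega>) \<partial>data_meas \<tau> \<Delta> \<sigma>0 \<sigma>)"
    using measurable_sets[OF borel_measurable_fst_vec, of I]
    by (subst nn_integral_indicator[symmetric]) (auto simp: I_def indicator_def intro!: nn_integral_cong)
  also have "\<dots> = (\<integral>\<^sup>+x0. ennreal (normal_density \<tau> \<sigma>0 x0) * indicator I x0 \<partial>lborel)"
    using \<sigma> by (rule nn_integral_data_meas_fst) (simp add: I_def)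
  also have "\<dots> = ennreal (Phi r - Phi (- r))"
    using \<sigma>0 r by (simp add: I_def nn_integral_normal_density_Icc)
  finally show ?thesis
    using Phi_mono[of "- r" r] r unfolding event measure_def by simp
qed

lemma data_density_standardized_exp:
  fixes \<sigma> t u :: "real^'k"
  assumes \<sigma>0: "0 < \<sigma>0" and \<sigma>: "\<And>j. 0 < \<sigma>$j"
  defines "g \<equiv> gam \<sigma>0 \<sigma>"
  shows "\<sigma>0 ^ Suc CARD('k) * data_density \<tau> (\<sigma>0 *\<^sub>R t) \<sigma>0 \<sigma> (\<tau> + \<sigma>0 * z, (\<chi> j. \<tau> + \<sigma>0 * z) + \<sigma>0 *\<^sub>R u)
    = sqrt (\<Prod>j\<in>UNIV. g$j) / (sqrt (2 * pi) ^ CARD('k) * sqrt (2 * pi))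
      * exp (- (z\<^sup>2 + (\<Sum>j\<in>UNIV. g$j * (z + (u$j - t$j))\<^sup>2)) / 2)"
proof -
  have g: "0 < g$j" for j unfolding g_def by (rule gam_pos[OF \<sigma>0 \<sigma>])
  have nd0: "\<sigma>0 * normal_density \<tau> \<sigma>0 (\<tau> + \<sigma>0 * z) = 1 / sqrt (2 * pi) * exp (- z\<^sup>2 / 2)"
    using normal_density_rescale[OF \<sigma>0, of \<tau> 0 \<sigma>0 z] \<sigma>0 by (simp add: std_normal_density_def)
  have ndj: "\<sigma>0 * normal_density (\<tau> + \<sigma>0 * t$j) (\<sigma>$j) (\<tau> + \<sigma>0 * z + \<sigma>0 * u$j)
      = sqrt (g$j) / sqrt (2 * pi) * exp (- (g$j * (z + (u$j - t$j))\<^sup>2) / 2)" for j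
  proof -
    have "\<sigma>$j / \<sigma>0 = 1 / sqrt (g$j)"
      using \<sigma>0 \<sigma>[of j] by (simp add: g_def gam_def real_sqrt_divide)
    then show ?thesis
      using normal_density_rescale[OF \<sigma>0, of \<tau> "t$j" "\<sigma>$j" "z + u$j"]
        normal_density_inverse_sqrt[OF g[of j], of "t$j" "z + u$j"]
      by (simp add: distrib_left add.assoc algebra_simps)
  qed
  have "\<sigma>0 ^ Suc CARD('k) * data_density \<tau> (\<sigma>0 *\<^sub>R t) \<sigma>0 \<sigma> (\<tau> + \<sigma>0 * z, (\<chi> j. \<tau> + \<sigma>0 * z) + \<sigma>0 *\<^sub>R u)
    = (\<sigma>0 * normal_density \<tau> \<sigma>0 (\<tau> + \<sigma>0 * z))
      * (\<Prod>j\<in>UNIV. \<sigma>0 * normal_density (\<tau> + \<sigma>0 * t$j) (\<sigma>$j) (\<tau> + \<sigma>0 * z + \<sigma>0 * u$j))"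
    by (simp add: data_density_def prod.distrib mult_ac)
  also have "\<dots> = 1 / sqrt (2 * pi) * exp (- z\<^sup>2 / 2) * (sqrt (\<Prod>j\<in>UNIV. g$j) / sqrt (2 * pi) ^ CARD('k)
      * exp (- (\<Sum>j\<in>UNIV. g$j * (z + (u$j - t$j))\<^sup>2) / 2))"
    unfolding nd0 ndj prod.distrib
    by (simp add: prod_dividef real_sqrt_prod exp_sum[symmetric] sum_negf sum_divide_distrib)
  also have "\<dots> = sqrt (\<Prod>j\<in>UNIV. g$j) / (sqrt (2 * pi) ^ CARD('k) * sqrt (2 * pi))
      * exp (- (z\<^sup>2 + (\<Sum>j\<in>UNIV. g$j * (z + (u$j - t$j))\<^sup>2)) / 2)"
    by (simp only: minus_add_distrib add_divide_distrib exp_add) (simp add: mult_ac)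
  finally show ?thesis .
qed

definition cond_mean :: "real^'k \<Rightarrow> real^'k \<Rightarrow> real^'k \<Rightarrow> real" where
  "cond_mean g t u = - (\<Sum>j\<in>UNIV. g$j * (u$j - t$j)) / (1 + norm1 g)"

lemma data_density_standardized:
  fixes \<sigma> t u :: "real^'k"
  assumes \<sigma>0: "0 < \<sigma>0" and \<sigma>: "\<And>j. 0 < \<sigma>$j"
  defines "g \<equiv> gam \<sigma>0 \<sigma>"
  shows "\<sigma>0 ^ Suc CARD('k) * data_density \<tau> (\<sigma>0 *\<^sub>R t) \<sigma>0 \<sigma> (\<tau> + \<sigma>0 * z, (\<chi> j. \<tau> + \<sigma>0 * z) + \<sigma>0 *\<^sub>R u)
    = mvn_density t (Vmat g) u * normal_density (cond_mean g t u) (1 / sqrt (1 + norm1 g)) z"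
proof -
  have g: "0 < g$j" for j unfolding g_def by (rule gam_pos[OF \<sigma>0 \<sigma>])
  define G P S Q where "G = 1 + norm1 g" and "P = (\<Prod>j\<in>UNIV. g$j)"
    and "S = (\<Sum>j\<in>UNIV. g$j * (u$j - t$j))"
    and "Q = (\<Sum>j\<in>UNIV. g$j * (u$j - t$j)\<^sup>2) - S\<^sup>2 / G"
  have G: "G = 1 + (\<Sum>j\<in>UNIV. g$j)" "0 < G"
    using g by (auto simp: G_def norm1_eq_sum less_imp_le add_pos_nonneg sum_nonneg)
  have "\<sigma>0 ^ Suc CARD('k) * data_density \<tau> (\<sigma>0 *\<^sub>R t) \<sigma>0 \<sigma> (\<tau> + \<sigma>0 * z, (\<chi> j. \<tau> + \<sigma>0 * z) + \<sigma>0 *\<^sub>R u)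
    = sqrt P / (sqrt (2 * pi) ^ CARD('k) * sqrt G) * exp (- Q / 2)
      * (sqrt G / sqrt (2 * pi) * exp (- (G * (z + S / G)\<^sup>2) / 2))"
    unfolding data_density_standardized_exp[OF \<sigma>0 \<sigma>] g_def[symmetric]
    using sum_squares_complete_square[of "\<lambda>j. g$j" z "\<lambda>j. u$j - t$j"] G
    by (simp add: P_def Q_def S_def exp_add[symmetric] add_divide_distrib diff_divide_distrib mult_ac)
  also have "\<dots> = mvn_density t (Vmat g) u * normal_density (cond_mean g t u) (1 / sqrt G) z"
    using normal_density_inverse_sqrt[OF G(2), of "cond_mean g t u" z]
    by (simp add: mvn_density_Vmat[OF g] cond_mean_def G_def P_def Q_def S_def)
  finally show ?thesis by (simp add: G_def)
qed

lemma nn_integral_data_meas_standardized: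
  fixes f :: "real \<times> (real^'k) \<Rightarrow> ennreal" and \<sigma> t :: "real^'k"
  assumes \<sigma>0: "0 < \<sigma>0" and \<sigma>: "\<And>j. 0 < \<sigma>$j" and f[measurable]: "f \<in> borel_measurable borel"
  defines "g \<equiv> gam \<sigma>0 \<sigma>"
  shows "(\<integral>\<^sup>+\<omega>. f \<omega> \<partial>data_meas \<tau> (\<sigma>0 *\<^sub>R t) \<sigma>0 \<sigma>)
    = (\<integral>\<^sup>+u. \<integral>\<^sup>+z. ennreal (mvn_density t (Vmat g) u * normal_density (cond_mean g t u) (1 / sqrt (1 + norm1 g)) z)
        * f (\<tau> + \<sigma>0 * z, (\<chi> j. \<tau> + \<sigma>0 * z) + \<sigma>0 *\<^sub>R u) \<partial>lborel \<partial>lborel)"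
proof -
  let ?D = "data_density \<tau> (\<sigma>0 *\<^sub>R t) \<sigma>0 \<sigma>"
  let ?\<psi> = "\<lambda>z u. (\<tau> + \<sigma>0 * z, (\<chi> j. \<tau> + \<sigma>0 * z) + \<sigma>0 *\<^sub>R u)"
  note [measurable] = borel_measurable_standardize[of "\<lambda>\<omega>. ennreal (?D \<omega>) * f \<omega>" \<tau> \<sigma>0]
  have "(\<integral>\<^sup>+\<omega>. f \<omega> \<partial>data_meas \<tau> (\<sigma>0 *\<^sub>R t) \<sigma>0 \<sigma>) = (\<integral>\<^sup>+\<omega>. ennreal (?D \<omega>) * f \<omega> \<partial>lborel)"
    unfolding data_meas_eq_density by (rule nn_integral_density) measurable
  also have "\<dots> = ennreal (\<sigma>0 ^ Suc CARD('k))
      * (\<integral>\<^sup>+u. \<integral>\<^sup>+z. ennreal (?D (?\<psi> z u)) * f (?\<psi> z u) \<partial>lborel \<partial>lborel)"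
    using \<sigma>0 by (rule nn_integral_lborel_standardize) measurable
  also have "\<dots> = (\<integral>\<^sup>+u. ennreal (\<sigma>0 ^ Suc CARD('k))
      * (\<integral>\<^sup>+z. ennreal (?D (?\<psi> z u)) * f (?\<psi> z u) \<partial>lborel) \<partial>lborel)"
    by (rule nn_integral_cmult[symmetric]) measurable
  also have "\<dots> = (\<integral>\<^sup>+u. \<integral>\<^sup>+z. ennreal (\<sigma>0 ^ Suc CARD('k)) * (ennreal (?D (?\<psi> z u)) * f (?\<psi> z u))
      \<partial>lborel \<partial>lborel)"
    by (intro nn_integral_cong nn_integral_cmult[symmetric]) measurable
  also have "\<dots> = (\<integral>\<^sup>+u. \<integral>\<^sup>+z. ennreal (mvn_density t (Vmat g) u
      * normal_density (cond_mean g t u) (1 / sqrt (1 + norm1 g)) z) * f (?\<psi> z u) \<partial>lborel \<partial>lborel)"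
  proof (intro nn_integral_cong)
    fix u :: "real^'k" and z :: real
    have "\<sigma>0 ^ Suc CARD('k) * ?D (?\<psi> z u)
        = mvn_density t (Vmat g) u * normal_density (cond_mean g t u) (1 / sqrt (1 + norm1 g)) z"
      using data_density_standardized[OF \<sigma>0 \<sigma>, of \<tau> t z u] by (simp add: g_def)
    moreover have "ennreal (\<sigma>0 ^ Suc CARD('k)) * ennreal (?D (?\<psi> z u)) = ennreal (\<sigma>0 ^ Suc CARD('k) * ?D (?\<psi> z u))"
      using \<sigma>0 data_density_nonneg by (intro ennreal_mult[symmetric]) auto
    ultimately show "ennreal (\<sigma>0 ^ Suc CARD('k)) * (ennreal (?D (?\<psi> z u)) * f (?\<psi> z u))
        = ennreal (mvn_density t (Vmat g) u * normal_density (cond_mean g t u) (1 / sqrt (1 + norm1 g)) z)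
          * f (?\<psi> z u)"
      by (simp only: mult.assoc[symmetric])
  qed
  finally show ?thesis .
qed

lemma nn_integral_mvn_density_Vmat:
  fixes g t :: "real^'k"
  assumes g: "\<And>j. 0 < g$j"
  shows "(\<integral>\<^sup>+u. ennreal (mvn_density t (Vmat g) u) \<partial>lborel) = 1"
proof -
  (* realise g as gam 1 \<sigma>; the standardised data density integrated over z is then the density of u *)
  define \<sigma> :: "real^'k" where "\<sigma> = (\<chi> j. 1 / sqrt (g$j))"
  have \<sigma>: "0 < \<sigma>$j" for j using g[of j] by (simp add: \<sigma>_def)
  have g_eq: "gam 1 \<sigma> = g" using g by (simp add: gam_def \<sigma>_def vec_eq_iff power_divide less_imp_le)
  define s where "s = 1 / sqrt (1 + norm1 g)"
  have s: "0 < s" unfolding s_def norm1_def by (simp add: add_pos_nonneg sum_nonneg)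
  interpret prob_space "data_meas 0 (1 *\<^sub>R t) 1 \<sigma>"
    by (rule prob_space_data_meas[OF _ \<sigma>]) simp
  have "1 = (\<integral>\<^sup>+\<omega>. 1 \<partial>data_meas 0 (1 *\<^sub>R t) 1 \<sigma>)"
    using emeasure_space_1 by simp
  also have "\<dots> = (\<integral>\<^sup>+u. \<integral>\<^sup>+z. ennreal (mvn_density t (Vmat g) u) * ennreal (normal_density (cond_mean g t u) s z)
      \<partial>lborel \<partial>lborel)"
    using mvn_density_Vmat_pos[OF g, THEN less_imp_le]
    by (subst nn_integral_data_meas_standardized[OF _ \<sigma>]) (simp_all add: g_eq s_def ennreal_mult)
  also have "\<dots> = (\<integral>\<^sup>+u. ennreal (mvn_density t (Vmat g) u) \<partial>lborel)"
    using prob_space.emeasure_space_1[OF prob_space_normal_density[OF s]]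
    by (simp add: nn_integral_cmult emeasure_density)
  finally show ?thesis ..
qed

lemma integrable_mvn_density_Vmat:
  fixes g t :: "real^'k"
  assumes "\<And>j. 0 < g$j"
  shows "integrable lborel (mvn_density t (Vmat g))"
  using nn_integral_mvn_density_Vmat[OF assms] mvn_density_Vmat_pos[OF assms]
  by (intro integrableI_nonneg) (auto simp: less_imp_le)

lemma integral_mvn_density_Vmat:
  fixes g t :: "real^'k"
  assumes "\<And>j. 0 < g$j"
  shows "(\<integral>u. mvn_density t (Vmat g) u \<partial>lborel) = 1"
  using nn_integral_mvn_density_Vmat[OF assms] mvn_density_Vmat_pos[OF assms]
  by (subst integral_eq_nn_integral) (auto simp: less_imp_le)

section \<open>The coverage probability\<close>

lemma borel_measurable_tau_PT[measurable]: "tau_PT \<alpha> \<sigma>0 \<sigma> \<in> borel_measurable borel"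
  unfolding tau_PT_def[abs_def] Let_def by measurable

definition pretest_shift :: "real \<Rightarrow> real^'k \<Rightarrow> real^'k \<Rightarrow> real" where
  "pretest_shift \<alpha> g u = (\<Sum>j\<in>UNIV. g$j / (1 + norm1 g) * u$j *
     (if \<bar>u$j\<bar> \<le> sqrt (1 + 1 / g$j) * cq (\<alpha> / 2) then 1 else 0))"

lemma tau_PT_standardized:
  assumes \<sigma>0: "0 < \<sigma>0"
  shows "tau_PT \<alpha> \<sigma>0 \<sigma> (\<tau> + \<sigma>0 * z, (\<chi> j. \<tau> + \<sigma>0 * z) + \<sigma>0 *\<^sub>R u) - \<tau>
    = \<sigma>0 * (z + pretest_shift \<alpha> (gam \<sigma>0 \<sigma>) u)"
proof -
  have diff: "((\<chi> j. \<tau> + \<sigma>0 * z) + \<sigma>0 *\<^sub>R u)$j - (\<tau> + \<sigma>0 * z) = \<sigma>0 * u$j" for j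
    by simp
  have cond: "(\<bar>\<sigma>0 * w\<bar> \<le> c * \<sigma>0 * C) = (\<bar>w\<bar> \<le> c * C)" for w c C
    using \<sigma>0 by (simp add: abs_mult mult.commute mult.left_commute)
  have "tau_PT \<alpha> \<sigma>0 \<sigma> (\<tau> + \<sigma>0 * z, (\<chi> j. \<tau> + \<sigma>0 * z) + \<sigma>0 *\<^sub>R u)
      = \<tau> + \<sigma>0 * z + (\<Sum>j\<in>UNIV. gam \<sigma>0 \<sigma> $ j / (1 + norm1 (gam \<sigma>0 \<sigma>)) * (\<sigma>0 * u$j) *
          (if \<bar>u$j\<bar> \<le> sqrt (1 + 1 / gam \<sigma>0 \<sigma> $ j) * cq (\<alpha> / 2) then 1 else 0))"
    by (simp only: tau_PT_def Let_def fst_conv snd_conv diff cond)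
  then show ?thesis
    by (simp add: pretest_shift_def sum_distrib_left algebra_simps)
qed

lemma abs_truncated_le:
  fixes w d c C :: real
  assumes "0 \<le> w" "w \<le> 1" "0 \<le> c"
  shows "\<bar>w * d * (if \<bar>d\<bar> \<le> c * C then 1 else 0)\<bar> \<le> c * \<bar>C\<bar>"
proof (cases "\<bar>d\<bar> \<le> c * C")
  case True
  have "\<bar>w * d\<bar> \<le> \<bar>d\<bar>"
    using assms by (simp add: abs_mult mult_left_le_one_le)
  also have "\<dots> \<le> c * \<bar>C\<bar>"
    using True assms(3) by (meson abs_ge_self mult_left_mono order_trans)
  finally show ?thesis using True by simp
qed (use assms in simp)

lemma abs_tau_PT_le:
  fixes \<sigma> :: "real^'k"
  assumes \<sigma>0: "0 < \<sigma>0" and \<sigma>: "\<And>j. 0 < \<sigma>$j"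
  shows "\<bar>tau_PT \<alpha> \<sigma>0 \<sigma> \<omega> - \<tau>\<bar> \<le> \<bar>fst \<omega> - \<tau>\<bar> + \<sigma>0 * \<bar>cq (\<alpha> / 2)\<bar> * (\<Sum>j\<in>UNIV. sqrt (1 + 1 / gam \<sigma>0 \<sigma> $ j))"
proof -
  define g where "g = gam \<sigma>0 \<sigma>"
  have g: "0 < g$j" for j unfolding g_def by (rule gam_pos[OF \<sigma>0 \<sigma>])
  define T where "T j = g$j / (1 + norm1 g) * (snd \<omega> $ j - fst \<omega>) *
    (if \<bar>snd \<omega> $ j - fst \<omega>\<bar> \<le> sqrt (1 + 1 / g$j) * \<sigma>0 * cq (\<alpha> / 2) then 1 else 0)" for j
  have "\<bar>T j\<bar> \<le> sqrt (1 + 1 / g$j) * \<sigma>0 * \<bar>cq (\<alpha> / 2)\<bar>" for j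
  proof -
    have "g$j \<le> 1 + norm1 g"
      using g member_le_sum[of j UNIV "\<lambda>i. g$i"] by (simp add: norm1_eq_sum less_imp_le)
    then show ?thesis
      unfolding T_def using g[of j] \<sigma>0 by (intro abs_truncated_le) auto
  qed
  then have "\<bar>sum T UNIV\<bar> \<le> \<sigma>0 * \<bar>cq (\<alpha> / 2)\<bar> * (\<Sum>j\<in>UNIV. sqrt (1 + 1 / g$j))"
    by (simp add: sum_distrib_left sum_distrib_right order_trans[OF sum_abs sum_mono] mult_ac)
  moreover have "tau_PT \<alpha> \<sigma>0 \<sigma> \<omega> - \<tau> = (fst \<omega> - \<tau>) + sum T UNIV"
    by (simp add: tau_PT_def Let_def T_def g_def)
  ultimately show ?thesis by (simp add: g_def)
qed

(* Given u, sqrt (1 + |g|_1) (tau_PT - tau) / sigma0 is normal with mean cond_bias and variance 1. *)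
definition cond_bias :: "real \<Rightarrow> real^'k \<Rightarrow> real^'k \<Rightarrow> real^'k \<Rightarrow> real" where
  "cond_bias \<alpha> g t u = g \<bullet> (t - trunc_vec \<alpha> g u) / sqrt (1 + norm1 g)"

lemma cond_bias_eq:
  "cond_bias \<alpha> g t u = sqrt (1 + norm1 g) * (pretest_shift \<alpha> g u + cond_mean g t u)"
proof -
  define H where "H = 1 + norm1 g"
  have H: "0 < H" unfolding H_def norm1_def by (simp add: add_pos_nonneg sum_nonneg)
  have "pretest_shift \<alpha> g u + cond_mean g t u
      = ((\<Sum>j\<in>UNIV. g$j * u$j * (if \<bar>u$j\<bar> \<le> sqrt (1 + 1 / g$j) * cq (\<alpha> / 2) then 1 else 0))
        - (\<Sum>j\<in>UNIV. g$j * (u$j - t$j))) / H"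
    by (simp add: pretest_shift_def cond_mean_def H_def sum_divide_distrib[symmetric] diff_divide_distrib)
  also have "(\<Sum>j\<in>UNIV. g$j * u$j * (if \<bar>u$j\<bar> \<le> sqrt (1 + 1 / g$j) * cq (\<alpha> / 2) then 1 else 0))
        - (\<Sum>j\<in>UNIV. g$j * (u$j - t$j)) = g \<bullet> (t - trunc_vec \<alpha> g u)"
    unfolding inner_vec_def trunc_vec_def sum_subtractf[symmetric]
    by (intro sum.cong) (auto simp: algebra_simps)
  finally have "pretest_shift \<alpha> g u + cond_mean g t u = g \<bullet> (t - trunc_vec \<alpha> g u) / H" .
  moreover have "X / sqrt H = sqrt H * (X / H)" for X
    using H by (simp add: real_div_sqrt field_simps)
  ultimately show ?thesis by (simp add: cond_bias_def H_def)
qed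

lemma abs_cond_bias_le:
  fixes g t u b :: "real^'k"
  assumes g: "\<And>j. 0 < g$j" and t: "\<And>j. \<bar>t$j\<bar> \<le> b$j" and u: "\<And>j. \<bar>u$j - t$j\<bar> \<le> 1"
  shows "\<bar>cond_bias \<alpha> g t u\<bar> \<le> (\<Sum>j\<in>UNIV. g$j * (b$j + 1))"
proof -
  have "\<bar>g \<bullet> (t - trunc_vec \<alpha> g u)\<bar> \<le> (\<Sum>j\<in>UNIV. \<bar>g$j * (t - trunc_vec \<alpha> g u)$j\<bar>)"
    unfolding inner_vec_def inner_real_def by (rule sum_abs)
  also have "\<dots> \<le> (\<Sum>j\<in>UNIV. g$j * (b$j + 1))"
  proof (rule sum_mono)
    fix j
    have "\<bar>(t - trunc_vec \<alpha> g u)$j\<bar> \<le> b$j + 1"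
      using t[of j] u[of j] by (auto simp: trunc_vec_def abs_minus_commute)
    then show "\<bar>g$j * (t - trunc_vec \<alpha> g u)$j\<bar> \<le> g$j * (b$j + 1)"
      using g[of j] by (simp add: abs_mult)
  qed
  finally have "\<bar>g \<bullet> (t - trunc_vec \<alpha> g u)\<bar> \<le> (\<Sum>j\<in>UNIV. g$j * (b$j + 1))" .
  moreover have "\<bar>g \<bullet> (t - trunc_vec \<alpha> g u)\<bar> / sqrt (1 + norm1 g) \<le> \<bar>g \<bullet> (t - trunc_vec \<alpha> g u)\<bar> / 1"
    by (rule divide_left_mono) (auto simp: norm1_def sum_nonneg add_pos_nonneg)
  moreover have "0 \<le> 1 + norm1 g"
    by (simp add: norm1_def sum_nonneg add_nonneg_nonneg)
  ultimately show ?thesis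
    by (simp add: cond_bias_def abs_divide)
qed

definition cover_integrand :: "real \<Rightarrow> real^'k \<Rightarrow> real^'k \<Rightarrow> real \<Rightarrow> real^'k \<Rightarrow> real" where
  "cover_integrand \<alpha> g t L u =
     (Phi (L - cond_bias \<alpha> g t u) - Phi (- L - cond_bias \<alpha> g t u)) * mvn_density t (Vmat g) u"

lemma borel_measurable_cond_bias[measurable]: "cond_bias \<alpha> g t \<in> borel_measurable borel"
proof -
  have "cond_bias \<alpha> g t = (\<lambda>u. (\<Sum>j\<in>UNIV. g$j * (t$j - (if sqrt (1 + 1 / g$j) * cq (\<alpha> / 2) < \<bar>u$j\<bar> then u$j else 0)))
      / sqrt (1 + norm1 g))"
    by (simp add: fun_eq_iff cond_bias_def inner_vec_def trunc_vec_def)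
  then show ?thesis by simp
qed

lemma borel_measurable_cover_integrand[measurable]: "cover_integrand \<alpha> g t L \<in> borel_measurable borel"
  unfolding cover_integrand_def[abs_def] by measurable

lemma cover_integrand_nonneg:
  fixes g :: "real^'k"
  assumes "\<And>j. 0 < g$j" "0 \<le> L"
  shows "0 \<le> cover_integrand \<alpha> g t L u"
  unfolding cover_integrand_def
  using Phi_mono[of "- L - cond_bias \<alpha> g t u" "L - cond_bias \<alpha> g t u"] mvn_density_Vmat_pos[OF assms(1), of t u] assms(2)
  by (intro mult_nonneg_nonneg) auto

lemma integrable_cover_integrand:
  fixes g t :: "real^'k"
  assumes g: "\<And>j. 0 < g$j"
  shows "integrable lborel (cover_integrand \<alpha> g t L)"
proof (rule Bochner_Integration.integrable_bound[OF integrable_mvn_density_Vmat[OF g, of t]])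
  show "AE u in lborel. norm (cover_integrand \<alpha> g t L u) \<le> norm (mvn_density t (Vmat g) u)"
  proof (rule AE_I2)
    fix u
    let ?a = "cond_bias \<alpha> g t u"
    have "\<bar>Phi (L - ?a) - Phi (- L - ?a)\<bar> \<le> 1"
      using Phi_nonneg Phi_le_1 by (simp add: abs_le_iff) (meson add_increasing2 diff_le_eq order_trans)
    then show "norm (cover_integrand \<alpha> g t L u) \<le> norm (mvn_density t (Vmat g) u)"
      using mvn_density_Vmat_pos[OF g, of t u]
      by (simp add: cover_integrand_def abs_mult mult_left_le_one_le)
  qed
qed simp

lemma cover_integrand_diff:
  "cover_integrand \<alpha> g t L2 u - cover_integrand \<alpha> g t L1 u
    = ((Phi (L2 - cond_bias \<alpha> g t u) - Phi (L1 - cond_bias \<alpha> g t u))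
      + (Phi (- L1 - cond_bias \<alpha> g t u) - Phi (- L2 - cond_bias \<alpha> g t u))) * mvn_density t (Vmat g) u"
  by (simp add: cover_integrand_def algebra_simps)

lemma nn_integral_conditional_coverage:
  fixes \<alpha> :: real and g t u :: "real^'k"
  assumes g: "\<And>j. 0 < g$j" and L: "0 \<le> L"
  defines "s \<equiv> sqrt (1 + norm1 g)" and "b \<equiv> pretest_shift \<alpha> g u"
  shows "(\<integral>\<^sup>+z. ennreal (mvn_density t (Vmat g) u * normal_density (cond_mean g t u) (1 / s) z)
      * indicator {- b - L / s .. - b + L / s} z \<partial>lborel) = ennreal (cover_integrand \<alpha> g t L u)"
proof -
  define m where "m = cond_mean g t u"
  have s: "0 < s" unfolding s_def norm1_def by (simp add: add_pos_nonneg sum_nonneg)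
  have "(\<integral>\<^sup>+z. ennreal (mvn_density t (Vmat g) u * normal_density m (1 / s) z)
      * indicator {- b - L / s .. - b + L / s} z \<partial>lborel)
    = ennreal (mvn_density t (Vmat g) u)
      * (\<integral>\<^sup>+z. ennreal (normal_density m (1 / s) z) * indicator {- b - L / s .. - b + L / s} z \<partial>lborel)"
    using mvn_density_Vmat_pos[OF g, of t u]
    by (subst nn_integral_cmult[symmetric]) (auto simp: ennreal_mult mult.assoc intro!: nn_integral_cong)
  also have "\<dots> = ennreal (mvn_density t (Vmat g) u) * ennreal (Phi (L - s * (b + m)) - Phi (- L - s * (b + m)))"
  proof -
    have "(- b + L / s - m) / (1 / s) = L - s * (b + m)" "(- b - L / s - m) / (1 / s) = - L - s * (b + m)"
      using s by (simp_all add: field_simps)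
    then show ?thesis
      using s L by (subst nn_integral_normal_density_Icc) simp_all
  qed
  also have "\<dots> = ennreal (cover_integrand \<alpha> g t L u)"
    using Phi_mono[of "- L - s * (b + m)" "L - s * (b + m)"] L mvn_density_Vmat_pos[OF g, of t u]
    by (simp add: cover_integrand_def cond_bias_eq b_def m_def s_def ennreal_mult[symmetric] mult.commute)
  finally show ?thesis by (simp add: m_def)
qed

lemma cover_prob_eq_integral:
  fixes \<sigma> t :: "real^'k"
  assumes \<sigma>0: "0 < \<sigma>0" and \<sigma>: "\<And>j. 0 < \<sigma>$j" and L: "0 \<le> L"
  shows "cover_prob \<alpha> \<sigma>0 \<sigma> \<tau> (\<sigma>0 *\<^sub>R t) L = (\<integral>u. cover_integrand \<alpha> (gam \<sigma>0 \<sigma>) t L u \<partial>lborel)"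
proof -
  define g where "g = gam \<sigma>0 \<sigma>"
  have g: "0 < g$j" for j unfolding g_def by (rule gam_pos[OF \<sigma>0 \<sigma>])
  define s where "s = sqrt (1 + norm1 g)"
  define M where "M = data_meas \<tau> (\<sigma>0 *\<^sub>R t) \<sigma>0 \<sigma>"
  define E where "E = {\<omega> \<in> space M. \<bar>tau_PT \<alpha> \<sigma>0 \<sigma> \<omega> - \<tau>\<bar> \<le> L / s * \<sigma>0}"
  have E[measurable]: "E \<in> sets borel" unfolding E_def M_def by measurable
  have event: "indicator E (\<tau> + \<sigma>0 * z, (\<chi> j. \<tau> + \<sigma>0 * z) + \<sigma>0 *\<^sub>R u)
      = (indicator {- b - L / s .. - b + L / s} z :: ennreal)" if "b = pretest_shift \<alpha> g u" for z u b
  proof -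
    have "(\<bar>\<sigma>0 * (z + b)\<bar> \<le> L / s * \<sigma>0) \<longleftrightarrow> \<bar>z + b\<bar> \<le> L / s"
      using \<sigma>0 by (metis abs_mult abs_of_pos mult.commute mult_le_cancel_left_pos)
    also have "\<dots> \<longleftrightarrow> z \<in> {- b - L / s .. - b + L / s}"
      by (auto simp: abs_le_iff)
    finally show ?thesis
      using tau_PT_standardized[OF \<sigma>0, of \<alpha> \<sigma> \<tau> z u] that
      by (simp add: E_def M_def g_def indicator_def)
  qed
  have "emeasure M E = (\<integral>\<^sup>+\<omega>. indicator E \<omega> \<partial>M)"
    by (simp add: M_def)
  also have "\<dots> = (\<integral>\<^sup>+u. \<integral>\<^sup>+z. ennreal (mvn_density t (Vmat g) u * normal_density (cond_mean g t u) (1 / s) z)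
      * indicator {- pretest_shift \<alpha> g u - L / s .. - pretest_shift \<alpha> g u + L / s} z \<partial>lborel \<partial>lborel)"
    unfolding M_def nn_integral_data_meas_standardized[OF \<sigma>0 \<sigma> borel_measurable_indicator[OF E]] event[OF refl]
    by (simp only: g_def s_def)
  also have "\<dots> = (\<integral>\<^sup>+u. ennreal (cover_integrand \<alpha> g t L u) \<partial>lborel)"
    unfolding s_def by (intro nn_integral_cong nn_integral_conditional_coverage[OF g L])
  finally have "emeasure M E = (\<integral>\<^sup>+u. ennreal (cover_integrand \<alpha> g t L u) \<partial>lborel)" .
  moreover have "(\<integral>u. cover_integrand \<alpha> g t L u \<partial>lborel) = enn2real (\<integral>\<^sup>+u. ennreal (cover_integrand \<alpha> g t L u) \<partial>lborel)"
    using cover_integrand_nonneg[OF g L] by (intro integral_eq_nn_integral) auto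
  ultimately show ?thesis
    by (simp add: cover_prob_def measure_def E_def M_def s_def g_def)
qed

lemma cover_prob_zero:
  fixes \<sigma> t :: "real^'k"
  assumes "0 < \<sigma>0" "\<And>j. 0 < \<sigma>$j"
  shows "cover_prob \<alpha> \<sigma>0 \<sigma> \<tau> (\<sigma>0 *\<^sub>R t) 0 = 0"
  by (simp add: cover_prob_eq_integral[OF assms] cover_integrand_def)

lemma cover_prob_diff_eq_integral:
  fixes \<sigma> t :: "real^'k"
  assumes \<sigma>0: "0 < \<sigma>0" and \<sigma>: "\<And>j. 0 < \<sigma>$j" and "0 \<le> L1" "0 \<le> L2"
  shows "cover_prob \<alpha> \<sigma>0 \<sigma> \<tau> (\<sigma>0 *\<^sub>R t) L2 - cover_prob \<alpha> \<sigma>0 \<sigma> \<tau> (\<sigma>0 *\<^sub>R t) L1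
    = (\<integral>u. cover_integrand \<alpha> (gam \<sigma>0 \<sigma>) t L2 u - cover_integrand \<alpha> (gam \<sigma>0 \<sigma>) t L1 u \<partial>lborel)"
  using assms integrable_cover_integrand[OF gam_pos[OF \<sigma>0 \<sigma>]] by (simp add: cover_prob_eq_integral)

lemma cover_prob_diff_le:
  fixes \<sigma> t :: "real^'k"
  assumes \<sigma>0: "0 < \<sigma>0" and \<sigma>: "\<And>j. 0 < \<sigma>$j" and L: "0 \<le> L1" "L1 \<le> L2"
  shows "cover_prob \<alpha> \<sigma>0 \<sigma> \<tau> (\<sigma>0 *\<^sub>R t) L2 - cover_prob \<alpha> \<sigma>0 \<sigma> \<tau> (\<sigma>0 *\<^sub>R t) L1 \<le> 2 * (L2 - L1)"
proof -
  define g where "g = gam \<sigma>0 \<sigma>"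
  have g: "0 < g$j" for j unfolding g_def by (rule gam_pos[OF \<sigma>0 \<sigma>])
  have "cover_prob \<alpha> \<sigma>0 \<sigma> \<tau> (\<sigma>0 *\<^sub>R t) L2 - cover_prob \<alpha> \<sigma>0 \<sigma> \<tau> (\<sigma>0 *\<^sub>R t) L1
      \<le> (\<integral>u. 2 * (L2 - L1) * mvn_density t (Vmat g) u \<partial>lborel)"
    unfolding cover_prob_diff_eq_integral[OF \<sigma>0 \<sigma> L(1) order_trans[OF L]] g_def[symmetric]
  proof (rule integral_mono)
    fix u
    let ?a = "cond_bias \<alpha> g t u"
    have "(Phi (L2 - ?a) - Phi (L1 - ?a)) + (Phi (- L1 - ?a) - Phi (- L2 - ?a)) \<le> 2 * (L2 - L1)"
      using Phi_diff_le[of "L1 - ?a" "L2 - ?a"] Phi_diff_le[of "- L2 - ?a" "- L1 - ?a"] L by simp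
    then show "cover_integrand \<alpha> g t L2 u - cover_integrand \<alpha> g t L1 u \<le> 2 * (L2 - L1) * mvn_density t (Vmat g) u"
      unfolding cover_integrand_diff using mvn_density_Vmat_pos[OF g, of t u] by (intro mult_right_mono) auto
  qed (use integrable_cover_integrand[OF g] integrable_mvn_density_Vmat[OF g] in auto)
  also have "\<dots> = 2 * (L2 - L1)"
    by (simp add: integral_mvn_density_Vmat[OF g])
  finally show ?thesis .
qed

lemma cover_integrand_diff_ge:
  fixes g t u b :: "real^'k"
  assumes g: "\<And>j. 0 < g$j" and t: "\<And>j. \<bar>t$j\<bar> \<le> b$j" and u: "\<And>j. \<bar>u$j - t$j\<bar> \<le> 1"
    and L: "0 \<le> L1" "L1 \<le> L2"
  shows "(L2 - L1) * std_normal_density (L2 + (\<Sum>j\<in>UNIV. g$j * (b$j + 1)))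
      * (exp (- norm1 g / 2) / sqrt ((2 * pi) ^ CARD('k) * det (Vmat g)))
    \<le> cover_integrand \<alpha> g t L2 u - cover_integrand \<alpha> g t L1 u"
proof -
  define A where "A = (\<Sum>j\<in>UNIV. g$j * (b$j + 1))"
  let ?a = "cond_bias \<alpha> g t u"
  have "\<bar>?a\<bar> \<le> A"
    unfolding A_def by (rule abs_cond_bias_le[OF g t u])
  then have "(L2 - L1) * std_normal_density (L2 + A) \<le> Phi (L2 - ?a) - Phi (L1 - ?a)"
    using Phi_diff_ge[of "L1 - ?a" "L2 - ?a" "L2 + A"] L by simp
  moreover have "0 \<le> Phi (L2 - ?a) - Phi (L1 - ?a)" "0 \<le> Phi (- L1 - ?a) - Phi (- L2 - ?a)"
    using Phi_mono[of "L1 - ?a" "L2 - ?a"] Phi_mono[of "- L2 - ?a" "- L1 - ?a"] L by simp_all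
  moreover have "exp (- norm1 g / 2) / sqrt ((2 * pi) ^ CARD('k) * det (Vmat g)) \<le> mvn_density t (Vmat g) u"
    by (rule mvn_density_Vmat_ge[OF g u])
  ultimately show ?thesis
    unfolding cover_integrand_diff A_def[symmetric] using det_Vmat_pos[OF g]
    by (intro mult_mono) auto
qed

lemma cover_prob_diff_ge:
  fixes \<sigma> t b :: "real^'k"
  assumes \<sigma>0: "0 < \<sigma>0" and \<sigma>: "\<And>j. 0 < \<sigma>$j" and t: "\<And>j. \<bar>t$j\<bar> \<le> b$j"
    and L: "0 \<le> L1" "L1 \<le> L2"
  defines "g \<equiv> gam \<sigma>0 \<sigma>"
  shows "(L2 - L1) * std_normal_density (L2 + (\<Sum>j\<in>UNIV. g$j * (b$j + 1)))
      * (exp (- norm1 g / 2) / sqrt ((2 * pi) ^ CARD('k) * det (Vmat g))) * 2 ^ CARD('k)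
    \<le> cover_prob \<alpha> \<sigma>0 \<sigma> \<tau> (\<sigma>0 *\<^sub>R t) L2 - cover_prob \<alpha> \<sigma>0 \<sigma> \<tau> (\<sigma>0 *\<^sub>R t) L1"
proof -
  have g: "0 < g$j" for j unfolding g_def by (rule gam_pos[OF \<sigma>0 \<sigma>])
  define c where "c = (L2 - L1) * std_normal_density (L2 + (\<Sum>j\<in>UNIV. g$j * (b$j + 1)))
      * (exp (- norm1 g / 2) / sqrt ((2 * pi) ^ CARD('k) * det (Vmat g)))"
  define B where "B = cbox (t - (\<chi> j. 1)) (t + (\<chi> j. 1))"
  have "c * 2 ^ CARD('k) = (\<integral>u. c * indicator B u \<partial>lborel)"
    using measure_lborel_cbox_cube[of 1 t] by (simp add: B_def)
  also have "\<dots> \<le> (\<integral>u. cover_integrand \<alpha> g t L2 u - cover_integrand \<alpha> g t L1 u \<partial>lborel)"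
  proof (rule integral_mono)
    fix u
    show "c * indicator B u \<le> cover_integrand \<alpha> g t L2 u - cover_integrand \<alpha> g t L1 u"
    proof (cases "u \<in> B")
      case True
      then have "\<bar>u$j - t$j\<bar> \<le> 1" for j
        by (auto simp: B_def mem_box_cart abs_le_iff dest: spec[of _ j])
      then show ?thesis
        using True cover_integrand_diff_ge[OF g t _ L] by (simp add: c_def)
    next
      case False
      have "0 \<le> cover_integrand \<alpha> g t L2 u - cover_integrand \<alpha> g t L1 u"
        unfolding cover_integrand_diff using Phi_mono L mvn_density_Vmat_pos[OF g, of t u]
        by (intro mult_nonneg_nonneg add_nonneg_nonneg) (auto simp: less_imp_le)
      then show ?thesis
        using False by simp
    qed
  qed (use integrable_cover_integrand[OF g] in
       \<open>auto simp: B_def emeasure_lborel_cbox_finite[simplified] intro!: integrable_real_indicator\<close>)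
  also have "\<dots> = cover_prob \<alpha> \<sigma>0 \<sigma> \<tau> (\<sigma>0 *\<^sub>R t) L2 - cover_prob \<alpha> \<sigma>0 \<sigma> \<tau> (\<sigma>0 *\<^sub>R t) L1"
    using cover_prob_diff_eq_integral[OF \<sigma>0 \<sigma> L(1) order_trans[OF L]] by (simp add: g_def)
  finally show ?thesis by (simp add: c_def)
qed

lemma exists_cover_prob_ge:
  fixes \<sigma> :: "real^'k"
  assumes \<sigma>0: "0 < \<sigma>0" and \<sigma>: "\<And>j. 0 < \<sigma>$j" and "c < 1"
  shows "\<exists>L0\<ge>0. \<forall>\<Delta>. c \<le> cover_prob \<alpha> \<sigma>0 \<sigma> \<tau> \<Delta> L0"
proof -
  obtain r where r: "0 \<le> r" "c \<le> Phi r - Phi (- r)"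
    using exists_Phi_symmetric_ge[OF \<open>c < 1\<close>] by blast
  define s where "s = sqrt (1 + norm1 (gam \<sigma>0 \<sigma>))"
  have s: "0 < s" unfolding s_def norm1_def by (simp add: add_pos_nonneg sum_nonneg)
  define B where "B = \<bar>cq (\<alpha> / 2)\<bar> * (\<Sum>j\<in>UNIV. sqrt (1 + 1 / gam \<sigma>0 \<sigma> $ j))"
  have "0 \<le> B"
    unfolding B_def using gam_pos[OF \<sigma>0 \<sigma>] by (intro mult_nonneg_nonneg sum_nonneg) (auto simp: less_imp_le)
  define L0 where "L0 = s * (r + B)"
  have "c \<le> cover_prob \<alpha> \<sigma>0 \<sigma> \<tau> \<Delta> L0" for \<Delta>
  proof -
    interpret prob_space "data_meas \<tau> \<Delta> \<sigma>0 \<sigma>"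
      by (rule prob_space_data_meas[OF \<sigma>0 \<sigma>])
    have "\<bar>tau_PT \<alpha> \<sigma>0 \<sigma> \<omega> - \<tau>\<bar> \<le> L0 / s * \<sigma>0" if "\<bar>fst \<omega> - \<tau>\<bar> \<le> r * \<sigma>0" for \<omega>
    proof -
      have "\<bar>tau_PT \<alpha> \<sigma>0 \<sigma> \<omega> - \<tau>\<bar> \<le> r * \<sigma>0 + \<sigma>0 * B"
        using abs_tau_PT_le[OF \<sigma>0 \<sigma>, of \<alpha> \<omega> \<tau>] that by (simp add: B_def mult.assoc)
      also have "\<dots> = (r + B) * \<sigma>0"
        by (simp add: algebra_simps)
      also have "r + B = L0 / s"
        using s by (simp add: L0_def)
      finally show ?thesis .
    qed
    then have "{\<omega> \<in> space (data_meas \<tau> \<Delta> \<sigma>0 \<sigma>). \<bar>fst \<omega> - \<tau>\<bar> \<le> r * \<sigma>0}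
      \<subseteq> {\<omega> \<in> space (data_meas \<tau> \<Delta> \<sigma>0 \<sigma>). \<bar>tau_PT \<alpha> \<sigma>0 \<sigma> \<omega> - \<tau>\<bar> \<le> L0 / s * \<sigma>0}"
      by auto
    then have "measure (data_meas \<tau> \<Delta> \<sigma>0 \<sigma>) {\<omega> \<in> space (data_meas \<tau> \<Delta> \<sigma>0 \<sigma>). \<bar>fst \<omega> - \<tau>\<bar> \<le> r * \<sigma>0}
      \<le> cover_prob \<alpha> \<sigma>0 \<sigma> \<tau> \<Delta> L0"
      unfolding cover_prob_def s_def by (intro finite_measure_mono) simp_all
    then show ?thesis
      using measure_data_meas_fst_deviation[OF \<sigma>0 \<sigma> r(1)] r(2) by simp
  qed
  moreover have "0 \<le> L0" unfolding L0_def using s r \<open>0 \<le> B\<close> by simp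
  ultimately show ?thesis by blast
qed

section \<open>Uniform coverage\<close>

lemma cINF_add_le:
  fixes f g :: "'a \<Rightarrow> real"
  assumes "S \<noteq> {}" "bdd_below (f ` S)" "\<And>x. x \<in> S \<Longrightarrow> f x + d \<le> g x"
  shows "(INF x\<in>S. f x) + d \<le> (INF x\<in>S. g x)"
proof (rule cINF_greatest[OF assms(1)])
  fix x assume "x \<in> S"
  then show "(INF x\<in>S. f x) + d \<le> g x"
    using cINF_lower[OF assms(2) \<open>x \<in> S\<close>] assms(3)[OF \<open>x \<in> S\<close>] by linarith
qed

lemma Inf_superlevel_strict_mono:
  fixes U :: "real \<Rightarrow> real"
  assumes cont: "continuous_on {0..} U" and mono: "strict_mono_on {0..} U"
    and "U 0 \<le> c" and "0 \<le> L0" "c \<le> U L0"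
  defines "Ls \<equiv> Inf {L. 0 \<le> L \<and> c \<le> U L}"
  shows "U Ls = c" and "\<And>L. 0 \<le> L \<Longrightarrow> c \<le> U L \<longleftrightarrow> Ls \<le> L"
    and "\<And>L. 0 \<le> L \<Longrightarrow> U L = c \<Longrightarrow> L = Ls"
proof -
  obtain L1 where L1: "0 \<le> L1" "L1 \<le> L0" "U L1 = c"
    using IVT'[of U 0 c L0] assms(3-5) continuous_on_subset[OF cont] by fastforce
  have less: "U L < U L'" if "0 \<le> L" "L < L'" for L L'
    using mono that by (auto simp: strict_mono_on_def)
  have le_iff: "c \<le> U L \<longleftrightarrow> L1 \<le> L" if "0 \<le> L" for L
  proof
    assume "c \<le> U L"
    then show "L1 \<le> L"
      using less[OF that, of L1] L1(3) by (meson linorder_not_le not_less)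
  next
    assume "L1 \<le> L"
    then show "c \<le> U L"
      using less[OF L1(1), of L] L1(3) by (cases "L1 = L") auto
  qed
  have "Ls = L1"
    unfolding Ls_def using L1 le_iff by (intro cInf_eq_minimum) auto
  then show "U Ls = c" and "\<And>L. 0 \<le> L \<Longrightarrow> c \<le> U L \<longleftrightarrow> Ls \<le> L"
    using L1 le_iff by auto
  show "L = Ls" if "0 \<le> L" "U L = c" for L
    using \<open>Ls = L1\<close> less[OF that(1)] less[OF L1(1)] L1(3) that(2) by (metis linorder_neqE_linordered_idom less_irrefl)
qed

lemma bias_set_eq_image:
  assumes "0 < \<sigma>0"
  shows "bias_set \<sigma>0 b = (\<lambda>t. \<sigma>0 *\<^sub>R t) ` {t. \<forall>j. \<bar>t$j\<bar> \<le> b$j}"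
proof (intro set_eqI iffI)
  fix \<Delta> assume "\<Delta> \<in> bias_set \<sigma>0 b"
  then show "\<Delta> \<in> (\<lambda>t. \<sigma>0 *\<^sub>R t) ` {t. \<forall>j. \<bar>t$j\<bar> \<le> b$j}"
    using assms by (intro image_eqI[of _ _ "(1 / \<sigma>0) *\<^sub>R \<Delta>"]) (auto simp: bias_set_def)
qed (use assms in \<open>auto simp: bias_set_def abs_mult\<close>)

lemma unif_cov_eq_INF:
  assumes "0 < \<sigma>0"
  shows "unif_cov \<alpha> \<sigma>0 \<sigma> b \<tau> L = (INF t\<in>{t. \<forall>j. \<bar>t$j\<bar> \<le> b$j}. cover_prob \<alpha> \<sigma>0 \<sigma> \<tau> (\<sigma>0 *\<^sub>R t) L)"
  unfolding unif_cov_def bias_set_eq_image[OF assms] image_image ..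

lemma bdd_below_cover_prob: "bdd_below ((\<lambda>x. cover_prob \<alpha> \<sigma>0 \<sigma> \<tau> (\<Delta> x) L) ` A)"
  by (rule bdd_belowI[of _ 0]) (auto simp: cover_prob_def)

lemma unif_cov_le_cover_prob:
  "\<Delta> \<in> bias_set \<sigma>0 b \<Longrightarrow> unif_cov \<alpha> \<sigma>0 \<sigma> b \<tau> L \<le> cover_prob \<alpha> \<sigma>0 \<sigma> \<tau> \<Delta> L"
  unfolding unif_cov_def by (rule cINF_lower[OF bdd_below_cover_prob[of _ _ _ _ "\<lambda>\<Delta>. \<Delta>"]])

lemma unif_cov_geI:
  fixes b :: "real^'k"
  assumes "\<And>j. 0 \<le> b$j" and "\<And>\<Delta>. \<Delta> \<in> bias_set \<sigma>0 b \<Longrightarrow> c \<le> cover_prob \<alpha> \<sigma>0 \<sigma> \<tau> \<Delta> L"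
  shows "c \<le> unif_cov \<alpha> \<sigma>0 \<sigma> b \<tau> L"
proof -
  have "0 \<in> bias_set \<sigma>0 b" using assms(1) by (simp add: bias_set_def)
  then show ?thesis
    unfolding unif_cov_def by (intro cINF_greatest assms(2)) auto
qed

lemma unif_cov_zero:
  fixes \<sigma> b :: "real^'k"
  assumes "0 < \<sigma>0" "\<And>j. 0 < \<sigma>$j" "\<And>j. 0 \<le> b$j"
  shows "unif_cov \<alpha> \<sigma>0 \<sigma> b \<tau> 0 = 0"
proof -
  have "{t. \<forall>j. \<bar>t$j\<bar> \<le> b$j} \<noteq> {}"
    using assms(3) by (auto intro!: exI[of _ 0])
  then show ?thesis
    by (simp add: unif_cov_eq_INF[OF assms(1)] cover_prob_zero[OF assms(1,2)])
qed

lemma unif_cov_le_add: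
  fixes \<sigma> b :: "real^'k"
  assumes \<sigma>0: "0 < \<sigma>0" and \<sigma>: "\<And>j. 0 < \<sigma>$j" and b: "\<And>j. 0 \<le> b$j" and L: "0 \<le> L1" "L1 \<le> L2"
  shows "unif_cov \<alpha> \<sigma>0 \<sigma> b \<tau> L2 \<le> unif_cov \<alpha> \<sigma>0 \<sigma> b \<tau> L1 + 2 * (L2 - L1)"
proof -
  have "unif_cov \<alpha> \<sigma>0 \<sigma> b \<tau> L2 + - (2 * (L2 - L1)) \<le> unif_cov \<alpha> \<sigma>0 \<sigma> b \<tau> L1"
    unfolding unif_cov_eq_INF[OF \<sigma>0]
  proof (intro cINF_add_le bdd_below_cover_prob)
    show "{t. \<forall>j. \<bar>t$j\<bar> \<le> b$j} \<noteq> {}" using b by (auto intro!: exI[of _ 0])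
    fix t
    show "cover_prob \<alpha> \<sigma>0 \<sigma> \<tau> (\<sigma>0 *\<^sub>R t) L2 + - (2 * (L2 - L1)) \<le> cover_prob \<alpha> \<sigma>0 \<sigma> \<tau> (\<sigma>0 *\<^sub>R t) L1"
      using cover_prob_diff_le[OF \<sigma>0 \<sigma> L, of \<alpha> \<tau> t] by linarith
  qed
  then show ?thesis by simp
qed

lemma strict_mono_on_unif_cov:
  fixes \<sigma> b :: "real^'k"
  assumes \<sigma>0: "0 < \<sigma>0" and \<sigma>: "\<And>j. 0 < \<sigma>$j" and b: "\<And>j. 0 \<le> b$j"
  shows "strict_mono_on {0..} (unif_cov \<alpha> \<sigma>0 \<sigma> b \<tau>)"
proof (rule strict_mono_onI)
  fix L1 L2 :: real assume "L1 \<in> {0..}" "L1 < L2"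
  then have L: "0 \<le> L1" "L1 \<le> L2" by auto
  define g where "g = gam \<sigma>0 \<sigma>"
  define \<delta> where "\<delta> = (L2 - L1) * std_normal_density (L2 + (\<Sum>j\<in>UNIV. g$j * (b$j + 1)))
      * (exp (- norm1 g / 2) / sqrt ((2 * pi) ^ CARD('k) * det (Vmat g))) * 2 ^ CARD('k)"
  have "0 < \<delta>"
    unfolding \<delta>_def g_def using \<open>L1 < L2\<close> det_Vmat_pos[OF gam_pos[OF \<sigma>0 \<sigma>]] normal_density_pos[of 1] by simp
  moreover have "unif_cov \<alpha> \<sigma>0 \<sigma> b \<tau> L1 + \<delta> \<le> unif_cov \<alpha> \<sigma>0 \<sigma> b \<tau> L2"
    unfolding unif_cov_eq_INF[OF \<sigma>0]
  proof (intro cINF_add_le bdd_below_cover_prob)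
    show "{t. \<forall>j. \<bar>t$j\<bar> \<le> b$j} \<noteq> {}" using b by (auto intro!: exI[of _ 0])
    fix t assume "t \<in> {t. \<forall>j. \<bar>t$j\<bar> \<le> b$j}"
    then have "\<delta> \<le> cover_prob \<alpha> \<sigma>0 \<sigma> \<tau> (\<sigma>0 *\<^sub>R t) L2 - cover_prob \<alpha> \<sigma>0 \<sigma> \<tau> (\<sigma>0 *\<^sub>R t) L1"
      unfolding \<delta>_def g_def by (intro cover_prob_diff_ge[OF \<sigma>0 \<sigma> _ L]) auto
    then show "cover_prob \<alpha> \<sigma>0 \<sigma> \<tau> (\<sigma>0 *\<^sub>R t) L1 + \<delta> \<le> cover_prob \<alpha> \<sigma>0 \<sigma> \<tau> (\<sigma>0 *\<^sub>R t) L2"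
      by linarith
  qed
  ultimately show "unif_cov \<alpha> \<sigma>0 \<sigma> b \<tau> L1 < unif_cov \<alpha> \<sigma>0 \<sigma> b \<tau> L2"
    by simp
qed

lemma continuous_on_unif_cov:
  fixes \<sigma> b :: "real^'k"
  assumes \<sigma>0: "0 < \<sigma>0" and \<sigma>: "\<And>j. 0 < \<sigma>$j" and b: "\<And>j. 0 \<le> b$j"
  shows "continuous_on {0..} (unif_cov \<alpha> \<sigma>0 \<sigma> b \<tau>)"
proof (rule lipschitz_on_continuous_on)
  let ?U = "unif_cov \<alpha> \<sigma>0 \<sigma> b \<tau>"
  have bound: "\<bar>?U L2 - ?U L1\<bar> \<le> 2 * (L2 - L1)" if "0 \<le> L1" "L1 \<le> L2" for L1 L2
    using unif_cov_le_add[OF assms that, of \<alpha> \<tau>] strict_mono_on_leD[OF strict_mono_on_unif_cov[OF assms], of L1 L2] that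
    by (simp add: abs_le_iff)
  show "2-lipschitz_on {0..} ?U"
  proof (rule lipschitz_onI)
    fix x y :: real assume "x \<in> {0..}" "y \<in> {0..}"
    then show "dist (?U x) (?U y) \<le> 2 * dist x y"
      using bound[of x y] bound[of y x] by (cases "x \<le> y") (auto simp: dist_real_def abs_minus_commute)
  qed simp
qed

lemma exists_unif_cov_ge:
  fixes \<sigma> b :: "real^'k"
  assumes "0 < \<sigma>0" "\<And>j. 0 < \<sigma>$j" "\<And>j. 0 \<le> b$j" "c < 1"
  shows "\<exists>L0\<ge>0. c \<le> unif_cov \<alpha> \<sigma>0 \<sigma> b \<tau> L0"
  using exists_cover_prob_ge[OF assms(1,2,4)] unif_cov_geI[OF assms(3)] by blast

lemma L_PT_characterization:
  fixes \<sigma> b :: "real^'k"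
  assumes \<sigma>0: "0 < \<sigma>0" and \<sigma>: "\<And>j. 0 < \<sigma>$j" and b: "\<And>j. 0 \<le> b$j" and "0 < \<zeta>" "\<zeta> < 1"
  shows "unif_cov \<alpha> \<sigma>0 \<sigma> b \<tau> (L_PT \<alpha> \<zeta> \<sigma>0 \<sigma> b \<tau>) = 1 - \<zeta>"
    and "\<And>L. 0 \<le> L \<Longrightarrow> 1 - \<zeta> \<le> unif_cov \<alpha> \<sigma>0 \<sigma> b \<tau> L \<longleftrightarrow> L_PT \<alpha> \<zeta> \<sigma>0 \<sigma> b \<tau> \<le> L"
    and "\<And>L. 0 \<le> L \<Longrightarrow> unif_cov \<alpha> \<sigma>0 \<sigma> b \<tau> L = 1 - \<zeta> \<Longrightarrow> L = L_PT \<alpha> \<zeta> \<sigma>0 \<sigma> b \<tau>"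
proof -
  obtain L0 where "0 \<le> L0" "1 - \<zeta> \<le> unif_cov \<alpha> \<sigma>0 \<sigma> b \<tau> L0"
    using exists_unif_cov_ge[OF \<sigma>0 \<sigma> b, of "1 - \<zeta>"] \<open>0 < \<zeta>\<close> by auto
  moreover have "unif_cov \<alpha> \<sigma>0 \<sigma> b \<tau> 0 \<le> 1 - \<zeta>"
    using unif_cov_zero[OF \<sigma>0 \<sigma> b] \<open>\<zeta> < 1\<close> by simp
  ultimately show "unif_cov \<alpha> \<sigma>0 \<sigma> b \<tau> (L_PT \<alpha> \<zeta> \<sigma>0 \<sigma> b \<tau>) = 1 - \<zeta>"
    and "\<And>L. 0 \<le> L \<Longrightarrow> 1 - \<zeta> \<le> unif_cov \<alpha> \<sigma>0 \<sigma> b \<tau> L \<longleftrightarrow> L_PT \<alpha> \<zeta> \<sigma>0 \<sigma> b \<tau> \<le> L"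
    and "\<And>L. 0 \<le> L \<Longrightarrow> unif_cov \<alpha> \<sigma>0 \<sigma> b \<tau> L = 1 - \<zeta> \<Longrightarrow> L = L_PT \<alpha> \<zeta> \<sigma>0 \<sigma> b \<tau>"
    using Inf_superlevel_strict_mono[OF continuous_on_unif_cov[OF \<sigma>0 \<sigma> b] strict_mono_on_unif_cov[OF \<sigma>0 \<sigma> b]]
    unfolding L_PT_def by blast+
qed

theorem theorem8:
  fixes \<sigma>0 \<alpha> \<zeta> :: real and \<sigma> b :: "real^'k"
  assumes "\<sigma>0 > 0" and "\<forall>j. \<sigma>$j > 0"
    and "0 < \<alpha>" and "\<alpha> < 1" and "0 < \<zeta>" and "\<zeta> < 1"
    and "\<forall>j. b$j \<ge> 0"
  shows
   "(\<forall>\<tau> (t::real^'k) L. L \<ge> 0 \<longrightarrow>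
       cover_prob \<alpha> \<sigma>0 \<sigma> \<tau> (\<sigma>0 *\<^sub>R t) L =
       (\<integral>u. (Phi (L - gam \<sigma>0 \<sigma> \<bullet> (t - trunc_vec \<alpha> (gam \<sigma>0 \<sigma>) u) / sqrt (1 + norm1 (gam \<sigma>0 \<sigma>)))
              - Phi (- L - gam \<sigma>0 \<sigma> \<bullet> (t - trunc_vec \<alpha> (gam \<sigma>0 \<sigma>) u) / sqrt (1 + norm1 (gam \<sigma>0 \<sigma>))))
             * mvn_density t (Vmat (gam \<sigma>0 \<sigma>)) u \<partial>lborel))
    \<and> (\<forall>\<tau>.
       unif_cov \<alpha> \<sigma>0 \<sigma> b \<tau> (L_PT \<alpha> \<zeta> \<sigma>0 \<sigma> b \<tau>) = 1 - \<zeta>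
       \<and> (\<forall>L \<ge> 0. unif_cov \<alpha> \<sigma>0 \<sigma> b \<tau> L = 1 - \<zeta> \<longrightarrow> L = L_PT \<alpha> \<zeta> \<sigma>0 \<sigma> b \<tau>)
       \<and> (\<forall>\<Delta>\<in>bias_set \<sigma>0 b. cover_prob \<alpha> \<sigma>0 \<sigma> \<tau> \<Delta> (L_PT \<alpha> \<zeta> \<sigma>0 \<sigma> b \<tau>) \<ge> 1 - \<zeta>)
       \<and> (\<forall>L \<ge> 0. (\<forall>\<Delta>\<in>bias_set \<sigma>0 b. cover_prob \<alpha> \<sigma>0 \<sigma> \<tau> \<Delta> L \<ge> 1 - \<zeta>)
                    \<longrightarrow> L_PT \<alpha> \<zeta> \<sigma>0 \<sigma> b \<tau> \<le> L))"
proof -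
  have \<sigma>0: "0 < \<sigma>0" and \<sigma>: "\<And>j. 0 < \<sigma>$j" and b: "\<And>j. 0 \<le> b$j"
    using assms by auto
  note L_PT = L_PT_characterization[OF \<sigma>0 \<sigma> b \<open>0 < \<zeta>\<close> \<open>\<zeta> < 1\<close>]
  show ?thesis
    apply (intro conjI allI impI ballI)
    subgoal for \<tau> t L
      using cover_prob_eq_integral[OF \<sigma>0 \<sigma>] by (simp add: cover_integrand_def cond_bias_def)
    subgoal for \<tau>
      by (rule L_PT(1))
    subgoal for \<tau> L
      by (rule L_PT(3))
    subgoal for \<tau> \<Delta>
      using L_PT(1)[of \<alpha> \<tau>] unif_cov_le_cover_prob[of \<Delta> \<sigma>0 b \<alpha> \<sigma> \<tau> "L_PT \<alpha> \<zeta> \<sigma>0 \<sigma> b \<tau>"] by simp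
    subgoal for \<tau> L
      using L_PT(2) unif_cov_geI[OF b] by blast
    done
qed

end
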